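(* Let $M$ be a quasi-minimal Lorentz surface in $\mathbb{E}^4_2$. Then $M$ has harmonic Gauss map (i.e. $\Delta G=0$) if and only if $M$ is flat and has parallel mean curvature vector field.
   Context: $\mathbb{E}^4_2$ is $\mathbb{R}^4$ with the metric $\langle\cdot,\cdot\rangle = dx_1^2+dx_2^2-dx_3^2-dx_4^2$. A Lorentz surface in $\mathbb{E}^4_2$ is an immersed surface with Lorentzian induced metric. $D$ denotes the normal connection, $H=\frac12\operatorname{tr}h$ the mean curvature vector field; the surface is quasi-minimal if $H\ne0$ and $\langle H,H\rangle=0$ everywhere; $H$ is parallel if $DH=0$; the surface is flat if its Gauss curvature vanishes identically. The space $\wedge^2\mathbb{E}^4_2$ is identified with a $6$-dimensional pseudo-Euclidean space via $\langle a\wedge b,c\wedge d\rangle=\langle a,c\rangle\langle b,d\rangle-\langle a,d\rangle\langle b,c\rangle$. The Gauss map is $G=x\wedge y:M\to\wedge^2\mathbb{E}^4_2$, where $\{x,y\}$ is a local tangent frame with $\langle x,x\rangle=\langle y,y\rangle=0$, $\langle x,y\rangle=-1$. The Laplacian acts componentwise on vector-valued functions by $\Delta\varphi = x(y(\varphi))+y(x(\varphi))-(\nabla_xy)(\varphi)-(\nabla_yx)(\varphi)$, where $\nabla$ is the Levi-Civita connection of $M$ (equivalently $\Delta\varphi=-\sum_i\varepsilon_i(e_ie_i\varphi-(\nabla_{e_i}e_i)\varphi)$ for an orthonormal frame $e_1,e_2$ with $\varepsilon_i=\langle e_i,e_i\rangle$). *)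

theory Defs
  imports "HOL-Analysis.Analysis"
begin

text \<open>Local-coordinate model of a surface in the pseudo-Euclidean space E^4_2.
  A surface patch is a map f : U \<subseteq> R^2 \<Rightarrow> R^4 (U open); coordinates are indexed by 0,1.\<close>

definition eps4 :: "4 \<Rightarrow> real" where
  "eps4 i = (if i = 1 \<or> i = 2 then 1 else -1)"

text \<open>The metric dx1^2+dx2^2-dx3^2-dx4^2 (components 1,2 positive, 3,4 negative; note 4 = 0 in type 4).\<close>
definition ip :: "real^4 \<Rightarrow> real^4 \<Rightarrow> real" where
  "ip a b = (\<Sum>i\<in>UNIV. eps4 i * (a $ i) * (b $ i))"

definition pd :: "nat \<Rightarrow> (real \<times> real \<Rightarrow> 'a::real_normed_vector) \<Rightarrow> real \<times> real \<Rightarrow> 'a" where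
  "pd i \<phi> p = frechet_derivative \<phi> (at p) (if i = 0 then (1, 0) else (0, 1))"

fun Ck_on :: "nat \<Rightarrow> (real \<times> real) set \<Rightarrow> (real \<times> real \<Rightarrow> 'a::real_normed_vector) \<Rightarrow> bool" where
  "Ck_on 0 U \<phi> = continuous_on U \<phi>"
| "Ck_on (Suc k) U \<phi> = (\<phi> differentiable_on U \<and> Ck_on k U (pd 0 \<phi>) \<and> Ck_on k U (pd 1 \<phi>))"

definition smooth_on :: "(real \<times> real) set \<Rightarrow> (real \<times> real \<Rightarrow> 'a::real_normed_vector) \<Rightarrow> bool" where
  "smooth_on U \<phi> = (\<forall>k. Ck_on k U \<phi>)"

definition gm :: "(real \<times> real \<Rightarrow> real^4) \<Rightarrow> nat \<Rightarrow> nat \<Rightarrow> real \<times> real \<Rightarrow> real" where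
  "gm f i j p = ip (pd i f p) (pd j f p)"

definition detg :: "(real \<times> real \<Rightarrow> real^4) \<Rightarrow> real \<times> real \<Rightarrow> real" where
  "detg f p = gm f 0 0 p * gm f 1 1 p - gm f 0 1 p * gm f 1 0 p"

definition ginv :: "(real \<times> real \<Rightarrow> real^4) \<Rightarrow> nat \<Rightarrow> nat \<Rightarrow> real \<times> real \<Rightarrow> real" where
  "ginv f i j p =
     (if i = 0 \<and> j = 0 then gm f 1 1 p
      else if i = 1 \<and> j = 1 then gm f 0 0 p
      else - gm f 0 1 p) / detg f p"

definition chr :: "(real \<times> real \<Rightarrow> real^4) \<Rightarrow> nat \<Rightarrow> nat \<Rightarrow> nat \<Rightarrow> real \<times> real \<Rightarrow> real" where
  "chr f k i j p = (1/2) * (\<Sum>l<2. ginv f k l p *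
      (pd i (gm f j l) p + pd j (gm f i l) p - pd l (gm f i j) p))"

text \<open>Riemann tensor R^l_{ijk} (R(d_j,d_k)d_i = R^l_{ijk} d_l) and Gauss curvature.\<close>
definition riem :: "(real \<times> real \<Rightarrow> real^4) \<Rightarrow> nat \<Rightarrow> nat \<Rightarrow> nat \<Rightarrow> nat \<Rightarrow> real \<times> real \<Rightarrow> real" where
  "riem f l i j k p = pd j (chr f l k i) p - pd k (chr f l j i) p
      + (\<Sum>m<2. chr f l j m p * chr f m k i p - chr f l k m p * chr f m j i p)"

definition gauss_curv :: "(real \<times> real \<Rightarrow> real^4) \<Rightarrow> real \<times> real \<Rightarrow> real" where
  "gauss_curv f p = (\<Sum>l<2. gm f 0 l p * riem f l 1 0 1 p) / detg f p"

definition flat :: "(real \<times> real) set \<Rightarrow> (real \<times> real \<Rightarrow> real^4) \<Rightarrow> bool" where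
  "flat U f = (\<forall>p\<in>U. gauss_curv f p = 0)"

definition nproj :: "(real \<times> real \<Rightarrow> real^4) \<Rightarrow> real \<times> real \<Rightarrow> real^4 \<Rightarrow> real^4" where
  "nproj f p v = v - (\<Sum>k<2. \<Sum>l<2. (ginv f k l p * ip v (pd k f p)) *\<^sub>R pd l f p)"

definition sff :: "(real \<times> real \<Rightarrow> real^4) \<Rightarrow> nat \<Rightarrow> nat \<Rightarrow> real \<times> real \<Rightarrow> real^4" where
  "sff f i j p = nproj f p (pd i (pd j f) p)"

definition mean_curv :: "(real \<times> real \<Rightarrow> real^4) \<Rightarrow> real \<times> real \<Rightarrow> real^4" where
  "mean_curv f p = (1/2) *\<^sub>R (\<Sum>i<2. \<Sum>j<2. ginv f i j p *\<^sub>R sff f i j p)"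

definition quasi_minimal :: "(real \<times> real) set \<Rightarrow> (real \<times> real \<Rightarrow> real^4) \<Rightarrow> bool" where
  "quasi_minimal U f = (\<forall>p\<in>U. mean_curv f p \<noteq> 0 \<and> ip (mean_curv f p) (mean_curv f p) = 0)"

text \<open>Parallel mean curvature: D_{d_i} H = (d_i H)^normal = 0.\<close>
definition parallel_H :: "(real \<times> real) set \<Rightarrow> (real \<times> real \<Rightarrow> real^4) \<Rightarrow> bool" where
  "parallel_H U f = (\<forall>p\<in>U. \<forall>i<2. nproj f p (pd i (mean_curv f) p) = 0)"

text \<open>Laplacian with the paper's sign convention: Delta phi = - g^{ij}(d_i d_j phi - Gamma^k_{ij} d_k phi).\<close>
definition lap :: "(real \<times> real \<Rightarrow> real^4) \<Rightarrow> (real \<times> real \<Rightarrow> 'a::real_normed_vector) \<Rightarrow> real \<times> real \<Rightarrow> 'a" where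
  "lap f \<phi> p = - (\<Sum>i<2. \<Sum>j<2. ginv f i j p *\<^sub>R
      (pd i (pd j \<phi>) p - (\<Sum>k<2. chr f k i j p *\<^sub>R pd k \<phi> p)))"

text \<open>Bivectors in wedge^2 E^4_2 represented as antisymmetric 4x4 arrays: (a wedge b)_{ij} = a_i b_j - a_j b_i.\<close>
definition wedge :: "real^4 \<Rightarrow> real^4 \<Rightarrow> real^4^4" where
  "wedge a b = (\<chi> i j. a $ i * b $ j - a $ j * b $ i)"

text \<open>Gauss map G = x wedge y for a null frame with <x,y> = -1; equals +-(f_u wedge f_v)/sqrt(-det g).\<close>
definition gauss_map :: "(real \<times> real \<Rightarrow> real^4) \<Rightarrow> real \<times> real \<Rightarrow> real^4^4" where
  "gauss_map f p = (1 / sqrt (- detg f p)) *\<^sub>R wedge (pd 0 f p) (pd 1 f p)"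

definition harmonic_gauss_map :: "(real \<times> real) set \<Rightarrow> (real \<times> real \<Rightarrow> real^4) \<Rightarrow> bool" where
  "harmonic_gauss_map U f = (\<forall>p\<in>U. lap f (gauss_map f) p = 0)"

definition lorentz_surface :: "(real \<times> real) set \<Rightarrow> (real \<times> real \<Rightarrow> real^4) \<Rightarrow> bool" where
  "lorentz_surface U f = (open U \<and> smooth_on U f \<and> (\<forall>p\<in>U. detg f p < 0))"

end

theory Submission
  imports Defs
begin

text \<open>
  Write the Gauss map as \<open>G = s (f\<^sub>0 \<and> f\<^sub>1)\<close> with \<open>s = (-det g)\<^sup>-\<^sup>1\<^sup>/\<^sup>2\<close>. Expanding its second
  derivatives with the Gauss and Weingarten formulas gives
  \<open>\<Delta>G = s (\<langle>h,h\<rangle> f\<^sub>0 \<and> f\<^sub>1 - 2 (D\<^sub>0H \<and> f\<^sub>1 - D\<^sub>1H \<and> f\<^sub>0) - 2 N)\<close>, where the bivector \<open>N\<close> is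
  built from the second fundamental form and lies in \<open>\<wedge>\<^sup>2\<close> of the normal plane. The three
  terms live in mutually orthogonal parts of \<open>\<wedge>\<^sup>2 E\<^sup>4\<^sub>2\<close>, and by the Gauss equation
  \<open>\<langle>h,h\<rangle> = 4\<langle>H,H\<rangle> - 2K = -2K\<close> for a quasi-minimal surface. So a harmonic Gauss map forces
  \<open>K = 0\<close> and \<open>DH = 0\<close>. Conversely, if \<open>K = 0\<close> and \<open>DH = 0\<close> it remains to see \<open>N = 0\<close>: the
  normal plane is spanned by the null vector \<open>H\<close> and a normal \<open>w\<close> with \<open>\<langle>H,w\<rangle> \<noteq> 0\<close>, so
  \<open>N = \<lambda> H \<and> w\<close>, and the Ricci equation for the parallel vector \<open>H\<close> says
  \<open>\<langle>N, H \<and> w\<rangle> = -\<lambda> \<langle>H,w\<rangle>\<^sup>2 = 0\<close>.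
\<close>

lemma ip_commute: "ip a b = ip b a"
  unfolding ip_def by (simp add: mult.commute mult.left_commute)

lemma ip_add_left: "ip (a + b) c = ip a c + ip b c"
  and ip_add_right: "ip c (a + b) = ip c a + ip c b"
  and ip_diff_left: "ip (a - b) c = ip a c - ip b c"
  and ip_diff_right: "ip c (a - b) = ip c a - ip c b"
  and ip_scaleR_left: "ip (r *\<^sub>R a) c = r * ip a c"
  and ip_scaleR_right: "ip c (r *\<^sub>R a) = r * ip c a"
  and ip_minus_left: "ip (- a) c = - ip a c"
  and ip_minus_right: "ip c (- a) = - ip c a"
  and ip_zero_left: "ip 0 c = 0"
  and ip_zero_right: "ip c 0 = 0"
  unfolding ip_def
  by (auto simp: algebra_simps sum.distrib sum_subtractf sum_distrib_left sum_negf)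

lemma ip_sum_left: "ip (\<Sum>k\<in>A. v k) c = (\<Sum>k\<in>A. ip (v k) c)"
  by (induction A rule: infinite_finite_induct) (auto simp: ip_add_left ip_zero_left)

lemma ip_sum_right: "ip c (\<Sum>k\<in>A. v k) = (\<Sum>k\<in>A. ip c (v k))"
  by (induction A rule: infinite_finite_induct) (auto simp: ip_add_right ip_zero_right)

lemmas ip_bilinear_simps = ip_add_left ip_add_right ip_diff_left ip_diff_right ip_scaleR_left
  ip_scaleR_right ip_minus_left ip_minus_right ip_zero_left ip_zero_right ip_sum_left ip_sum_right

lemma ip_nondegenerate:
  assumes "\<And>e. ip v e = 0"
  shows "v = 0"
proof -
  have "ip v (axis k 1) = eps4 k * v $ k" for k
    unfolding ip_def axis_def by (simp add: if_distrib cong: if_cong)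
  then have "v $ k = 0" for k
    using assms[of "axis k 1"] by (auto simp: eps4_def split: if_splits)
  then show ?thesis by (simp add: vec_eq_iff)
qed

lemma bounded_bilinear_ip: "bounded_bilinear ip"
  by (rule bilinear_conv_bounded_bilinear[THEN iffD1])
    (auto simp: bilinear_def ip_bilinear_simps intro!: linearI)

lemma wedge_add_left: "wedge (a + b) c = wedge a c + wedge b c"
  and wedge_add_right: "wedge c (a + b) = wedge c a + wedge c b"
  and wedge_scaleR_left: "wedge (r *\<^sub>R a) c = r *\<^sub>R wedge a c"
  and wedge_scaleR_right: "wedge c (r *\<^sub>R a) = r *\<^sub>R wedge c a"
  and wedge_zero_left: "wedge 0 c = 0"
  and wedge_self: "wedge a a = 0"
  and wedge_commute: "wedge b a = - wedge a b"
  unfolding wedge_def by (auto simp: vec_eq_iff algebra_simps)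

lemma wedge_component: "wedge a b $ i $ j = a $ i * b $ j - a $ j * b $ i"
  unfolding wedge_def by simp

lemma bounded_bilinear_wedge: "bounded_bilinear wedge"
  by (rule bilinear_conv_bounded_bilinear[THEN iffD1])
    (auto simp: bilinear_def wedge_add_left wedge_add_right wedge_scaleR_left wedge_scaleR_right
      intro!: linearI)

lemma wedge_in_span:
  "wedge (a1 *\<^sub>R x + a2 *\<^sub>R y) (b1 *\<^sub>R x + b2 *\<^sub>R y) = (a1 * b2 - a2 * b1) *\<^sub>R wedge x y"
  using wedge_commute[of x y]
  by (simp add: wedge_add_left wedge_add_right wedge_scaleR_left wedge_scaleR_right wedge_self
      algebra_simps)

text \<open>The inner product of \<open>\<wedge>\<^sup>2 E\<^sup>4\<^sub>2\<close>; the factor \<open>1/2\<close> compensates for summing over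
  ordered pairs of indices.\<close>

definition bivector_ip :: "real^4^4 \<Rightarrow> real^4^4 \<Rightarrow> real" where
  "bivector_ip A B = (1/2) * (\<Sum>i\<in>UNIV. \<Sum>j\<in>UNIV. eps4 i * eps4 j * A $ i $ j * B $ i $ j)"

lemma bivector_ip_add_left: "bivector_ip (A + B) C = bivector_ip A C + bivector_ip B C"
  and bivector_ip_diff_left: "bivector_ip (A - B) C = bivector_ip A C - bivector_ip B C"
  and bivector_ip_scaleR_left: "bivector_ip (r *\<^sub>R A) C = r * bivector_ip A C"
  and bivector_ip_zero_left: "bivector_ip 0 C = 0"
  unfolding bivector_ip_def
  by (auto simp: algebra_simps sum.distrib sum_subtractf sum_distrib_left)

lemma bivector_ip_wedge:
  "bivector_ip (wedge a b) (wedge c d) = ip a c * ip b d - ip a d * ip b c"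
  unfolding bivector_ip_def wedge_def ip_def by (simp add: sum_4 algebra_simps eps4_def)

lemma eq_0_if_ip_orthogonal_to_basis:
  fixes v :: "4 \<Rightarrow> real^4" and r :: "real^4"
  assumes indep: "\<And>u::real^4. (\<Sum>i\<in>UNIV. u $ i *\<^sub>R v i) = 0 \<Longrightarrow> u = 0"
    and orth: "\<And>i. ip r (v i) = 0"
  shows "r = 0"
proof -
  define A :: "real^4^4" where "A = (\<chi> i k. v i $ k)"
  have "transpose A *v u = (\<Sum>i\<in>UNIV. u $ i *\<^sub>R v i)" for u
    unfolding A_def by (simp add: vec_eq_iff vector_matrix_mult_def sum_component mult.commute)
  then have "\<forall>u. transpose A *v u = 0 \<longrightarrow> u = 0" using indep by simp
  then obtain B where "B ** transpose A = mat 1" using matrix_left_invertible_ker by blast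
  then have "transpose A ** B = mat 1" using matrix_left_right_inverse by blast
  then have "transpose (transpose A ** B) = mat 1" by simp
  then have "transpose B ** A = mat 1" by (simp add: matrix_transpose_mul)
  then have inj: "\<And>x. A *v x = 0 \<Longrightarrow> x = 0" using matrix_left_invertible_ker by blast
  define Jr :: "real^4" where "Jr = (\<chi> k. eps4 k * r $ k)"
  have "(A *v Jr) $ i = ip r (v i)" for i
    unfolding A_def Jr_def ip_def by (simp add: matrix_vector_mult_def algebra_simps)
  then have "A *v Jr = 0" using orth by (simp add: vec_eq_iff)
  then have "Jr = 0" by (rule inj)
  then have "r $ k = 0" for k
    unfolding Jr_def by (auto simp: vec_eq_iff eps4_def split: if_splits)
  then show ?thesis by (simp add: vec_eq_iff)
qed

lemma eq_0_if_nonsingular_2x2: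
  fixes a b g00 g01 g11 :: real
  assumes "g00 * g11 - g01 * g01 \<noteq> 0" "a * g00 + b * g01 = 0" "a * g01 + b * g11 = 0"
  shows "a = 0 \<and> b = 0"
proof -
  have "a * (g00 * g11 - g01 * g01) = (a * g00 + b * g01) * g11 - (a * g01 + b * g11) * g01"
    "b * (g00 * g11 - g01 * g01) = (a * g01 + b * g11) * g00 - (a * g00 + b * g01) * g01"
    by (simp_all add: algebra_simps)
  then have "a * (g00 * g11 - g01 * g01) = 0" "b * (g00 * g11 - g01 * g01) = 0"
    using assms(2,3) by simp_all
  then show ?thesis using assms(1) by simp
qed

lemma frame_with_null_normal_independent:
  fixes x0 x1 H w :: "real^4"
  assumes det: "ip x0 x0 * ip x1 x1 - ip x0 x1 * ip x0 x1 \<noteq> 0"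
    and H0: "ip H x0 = 0" and H1: "ip H x1 = 0" and w0: "ip w x0 = 0" and w1: "ip w x1 = 0"
    and HH: "ip H H = 0" and Hw: "ip H w \<noteq> 0"
    and z: "c1 *\<^sub>R x0 + c2 *\<^sub>R x1 + c3 *\<^sub>R H + c4 *\<^sub>R w = 0"
  shows "c1 = 0 \<and> c2 = 0 \<and> c3 = 0 \<and> c4 = 0"
proof -
  have "c1 * ip x0 x0 + c2 * ip x0 x1 = 0"
    using arg_cong[OF z, of "\<lambda>z. ip z x0"] H0 w0 by (simp add: ip_bilinear_simps ip_commute[of x1 x0])
  moreover have "c1 * ip x0 x1 + c2 * ip x1 x1 = 0"
    using arg_cong[OF z, of "\<lambda>z. ip z x1"] H1 w1 by (simp add: ip_bilinear_simps)
  ultimately have c12: "c1 = 0 \<and> c2 = 0" by (rule eq_0_if_nonsingular_2x2[OF det])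
  have "c4 * ip H w = 0"
    using arg_cong[OF z, of "\<lambda>z. ip z H"] H0 H1 HH c12
    by (simp add: ip_bilinear_simps ip_commute[of x0 H] ip_commute[of x1 H] ip_commute[of w H])
  then have c4: "c4 = 0" using Hw by simp
  have "c3 * ip H w = 0"
    using arg_cong[OF z, of "\<lambda>z. ip z w"] w0 w1 c12 c4
    by (simp add: ip_bilinear_simps ip_commute[of x0 w] ip_commute[of x1 w])
  then show ?thesis using c12 c4 Hw by simp
qed

lemma normal_plane_span:
  fixes x0 x1 H w v :: "real^4"
  assumes det: "ip x0 x0 * ip x1 x1 - ip x0 x1 * ip x0 x1 \<noteq> 0"
    and H0: "ip H x0 = 0" and H1: "ip H x1 = 0" and w0: "ip w x0 = 0" and w1: "ip w x1 = 0"
    and HH: "ip H H = 0" and Hw: "ip H w \<noteq> 0"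
    and v0: "ip v x0 = 0" and v1: "ip v x1 = 0"
  shows "\<exists>\<alpha> \<beta>. v = \<alpha> *\<^sub>R H + \<beta> *\<^sub>R w"
proof -
  define \<beta> where "\<beta> = ip v H / ip H w"
  define \<alpha> where "\<alpha> = (ip v w - \<beta> * ip w w) / ip H w"
  define basis :: "4 \<Rightarrow> real^4" where
    "basis i = (if i = 1 then x0 else if i = 2 then x1 else if i = 3 then H else w)" for i
  have "v - \<alpha> *\<^sub>R H - \<beta> *\<^sub>R w = 0"
  proof (rule eq_0_if_ip_orthogonal_to_basis[of basis])
    fix u :: "real^4"
    assume "(\<Sum>i\<in>UNIV. u $ i *\<^sub>R basis i) = 0"
    then have "u $ 1 *\<^sub>R x0 + u $ 2 *\<^sub>R x1 + u $ 3 *\<^sub>R H + u $ 4 *\<^sub>R w = 0"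
      by (simp add: sum_4 basis_def)
    from frame_with_null_normal_independent[OF det H0 H1 w0 w1 HH Hw this]
    show "u = 0" by (simp add: vec_eq_iff forall_4)
  next
    fix i :: 4
    have "ip (v - \<alpha> *\<^sub>R H - \<beta> *\<^sub>R w) x0 = 0" "ip (v - \<alpha> *\<^sub>R H - \<beta> *\<^sub>R w) x1 = 0"
      using v0 v1 H0 H1 w0 w1 by (simp_all add: ip_bilinear_simps)
    moreover have "ip (v - \<alpha> *\<^sub>R H - \<beta> *\<^sub>R w) H = 0"
      unfolding \<beta>_def using HH Hw by (simp add: ip_bilinear_simps ip_commute[of w H])
    moreover have "ip (v - \<alpha> *\<^sub>R H - \<beta> *\<^sub>R w) w = 0"
      unfolding \<alpha>_def using Hw by (simp add: ip_bilinear_simps field_simps)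
    ultimately show "ip (v - \<alpha> *\<^sub>R H - \<beta> *\<^sub>R w) (basis i) = 0"
      unfolding basis_def by auto
  qed
  then have "v = \<alpha> *\<^sub>R H + \<beta> *\<^sub>R w" by (simp add: algebra_simps)
  then show ?thesis by blast
qed

definition coord_dir :: "nat \<Rightarrow> real \<times> real" where
  "coord_dir i = (if i = 0 then (1, 0) else (0, 1))"

lemma pd_eq_frechet_derivative: "pd i \<phi> p = frechet_derivative \<phi> (at p) (coord_dir i)"
  unfolding pd_def coord_dir_def by simp

lemma pd_eq_pd_1: "i \<noteq> 0 \<Longrightarrow> pd i = pd 1"
  unfolding pd_def[abs_def] by simp

lemma has_derivative_imp_pd: "(\<phi> has_derivative D) (at p) \<Longrightarrow> pd i \<phi> p = D (coord_dir i)"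
  unfolding pd_eq_frechet_derivative using frechet_derivative_at by metis

lemma differentiable_has_frechet_derivative:
  "\<phi> differentiable at p \<Longrightarrow> (\<phi> has_derivative frechet_derivative \<phi> (at p)) (at p)"
  using frechet_derivative_works by blast

lemma differentiable_bilinear:
  assumes "bounded_bilinear B" "\<phi> differentiable at p" "\<psi> differentiable at p"
  shows "(\<lambda>q. B (\<phi> q) (\<psi> q)) differentiable at p"
  using bounded_bilinear.FDERIV[OF assms(1) assms(2,3)[THEN differentiable_has_frechet_derivative]]
  unfolding differentiable_def by blast

lemma pd_bilinear:
  assumes "bounded_bilinear B" "\<phi> differentiable at p" "\<psi> differentiable at p"
  shows "pd i (\<lambda>q. B (\<phi> q) (\<psi> q)) p = B (pd i \<phi> p) (\<psi> p) + B (\<phi> p) (pd i \<psi> p)"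
  using has_derivative_imp_pd[OF bounded_bilinear.FDERIV[OF assms(1)
        assms(2,3)[THEN differentiable_has_frechet_derivative]], of i]
  by (simp add: pd_eq_frechet_derivative add.commute)

lemma pd_add:
  assumes "\<phi> differentiable at p" "\<psi> differentiable at p"
  shows "pd i (\<lambda>q. \<phi> q + \<psi> q) p = pd i \<phi> p + pd i \<psi> p"
  using has_derivative_imp_pd[OF has_derivative_add[OF
        assms[THEN differentiable_has_frechet_derivative]], of i]
  by (simp add: pd_eq_frechet_derivative)

lemma pd_diff:
  assumes "\<phi> differentiable at p" "\<psi> differentiable at p"
  shows "pd i (\<lambda>q. \<phi> q - \<psi> q) p = pd i \<phi> p - pd i \<psi> p"
  using has_derivative_imp_pd[OF has_derivative_diff[OF
        assms[THEN differentiable_has_frechet_derivative]], of i]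
  by (simp add: pd_eq_frechet_derivative)

lemma pd_minus:
  assumes "\<phi> differentiable at p"
  shows "pd i (\<lambda>q. - \<phi> q) p = - pd i \<phi> p"
  using has_derivative_imp_pd[OF has_derivative_minus[OF
        assms[THEN differentiable_has_frechet_derivative]], of i]
  by (simp add: pd_eq_frechet_derivative)

lemma pd_const: "pd i (\<lambda>q. c) p = 0"
  using has_derivative_imp_pd[OF has_derivative_const[of c "at p"], of i] by simp

lemma differentiable_sum': "(\<And>k. \<phi> k differentiable at p) \<Longrightarrow> (\<lambda>q. \<Sum>k\<in>A. \<phi> k q) differentiable at p"
  by (cases "finite A") (auto intro!: differentiable_sum)

lemma pd_sum:
  assumes "finite A" "\<And>k. k \<in> A \<Longrightarrow> \<phi> k differentiable at p"
  shows "pd i (\<lambda>q. \<Sum>k\<in>A. \<phi> k q) p = (\<Sum>k\<in>A. pd i (\<phi> k) p)"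
  using assms
proof (induction A rule: finite_induct)
  case (insert x F)
  have "(\<lambda>q. \<Sum>k\<in>F. \<phi> k q) differentiable at p"
    using insert.hyps insert.prems by (auto intro!: differentiable_sum)
  then have "pd i (\<lambda>q. \<phi> x q + (\<Sum>k\<in>F. \<phi> k q)) p = pd i (\<phi> x) p + pd i (\<lambda>q. \<Sum>k\<in>F. \<phi> k q) p"
    using insert.prems by (intro pd_add) auto
  also have "\<dots> = pd i (\<phi> x) p + (\<Sum>k\<in>F. pd i (\<phi> k) p)"
    using insert.IH insert.prems by simp
  finally show ?case
    using insert.hyps by simp
qed (simp add: pd_const)

lemma pd_comp_real:
  fixes g :: "real \<Rightarrow> real" and \<phi> :: "real \<times> real \<Rightarrow> real"
  assumes "DERIV g (\<phi> p) :> g'" "\<phi> differentiable at p"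
  shows "pd i (\<lambda>q. g (\<phi> q)) p = pd i \<phi> p * g'"
    and "(\<lambda>q. g (\<phi> q)) differentiable at p"
proof -
  have D: "((\<lambda>q. g (\<phi> q)) has_derivative (\<lambda>h. frechet_derivative \<phi> (at p) h * g')) (at p)"
    using DERIV_compose_FDERIV[OF assms(1) differentiable_has_frechet_derivative[OF assms(2)]] .
  then show "pd i (\<lambda>q. g (\<phi> q)) p = pd i \<phi> p * g'"
    using has_derivative_imp_pd[OF D, of i] by (simp add: pd_eq_frechet_derivative)
  show "(\<lambda>q. g (\<phi> q)) differentiable at p"
    using D unfolding differentiable_def by blast
qed

lemma DERIV_inverse_sqrt_minus:
  fixes x :: real
  assumes x: "x < 0"
  shows "DERIV (\<lambda>x. inverse (sqrt (- x))) x :> inverse (sqrt (- x)) ^ 3 / 2"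
proof -
  have s: "DERIV (\<lambda>x. sqrt (- x)) x :> inverse (sqrt (- x)) / 2 * (- 1)"
    by (rule DERIV_chain2[OF DERIV_real_sqrt]) (use x in \<open>auto intro!: derivative_eq_intros\<close>)
  have "sqrt (- x) \<noteq> 0" using x by simp
  from DERIV_inverse'[OF s this] show ?thesis
    by (rule DERIV_cong) (simp add: power3_eq_cube)
qed

lemma pd_divide:
  fixes \<phi> \<psi> :: "real \<times> real \<Rightarrow> real"
  assumes "\<phi> differentiable at p" "\<psi> differentiable at p" "\<psi> p \<noteq> 0"
  shows "pd i (\<lambda>q. \<phi> q / \<psi> q) p = (pd i \<phi> p * \<psi> p - \<phi> p * pd i \<psi> p) / (\<psi> p)\<^sup>2"
    and "(\<lambda>q. \<phi> q / \<psi> q) differentiable at p"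
proof -
  have inv: "DERIV inverse (\<psi> p) :> - (inverse (\<psi> p) ^ 2)"
    using DERIV_inverse[of "\<psi> p"] assms(3) by (simp add: power2_eq_square)
  note pd_inv = pd_comp_real[OF inv assms(2)]
  have "pd i (\<lambda>q. \<phi> q * inverse (\<psi> q)) p =
      pd i \<phi> p * inverse (\<psi> p) + \<phi> p * (pd i \<psi> p * - (inverse (\<psi> p) ^ 2))"
    using pd_bilinear[OF bounded_bilinear_mult assms(1) pd_inv(2), of i] by (simp only: pd_inv(1))
  then show "pd i (\<lambda>q. \<phi> q / \<psi> q) p = (pd i \<phi> p * \<psi> p - \<phi> p * pd i \<psi> p) / (\<psi> p)\<^sup>2"
    using assms(3) by (simp add: inverse_eq_divide field_simps power2_eq_square)
  show "(\<lambda>q. \<phi> q / \<psi> q) differentiable at p"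
    using differentiable_bilinear[OF bounded_bilinear_mult assms(1) pd_inv(2)]
    by (simp add: divide_inverse)
qed

lemma has_derivative_cong_open:
  assumes "open U" "p \<in> U" "\<And>q. q \<in> U \<Longrightarrow> \<phi> q = \<psi> q"
  shows "(\<phi> has_derivative D) (at p) \<longleftrightarrow> (\<psi> has_derivative D) (at p)"
  using has_derivative_transform_within_open[OF _ assms(1,2), of \<phi> D UNIV \<psi>]
    has_derivative_transform_within_open[OF _ assms(1,2), of \<psi> D UNIV \<phi>] assms(3)
  by auto

lemma pd_cong_open:
  assumes "open U" "p \<in> U" "\<And>q. q \<in> U \<Longrightarrow> \<phi> q = \<psi> q"
  shows "pd i \<phi> p = pd i \<psi> p"
  unfolding pd_def frechet_derivative_def using has_derivative_cong_open[of U p \<phi> \<psi>] assms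
  by simp

lemma differentiable_cong_open:
  assumes "open U" "p \<in> U" "\<And>q. q \<in> U \<Longrightarrow> \<phi> q = \<psi> q"
  shows "\<phi> differentiable at p \<longleftrightarrow> \<psi> differentiable at p"
  unfolding differentiable_def using has_derivative_cong_open[of U p \<phi> \<psi>] assms
  by simp

lemma pd_eq_0_if_constant_on_open:
  assumes "open U" "p \<in> U" "\<And>q. q \<in> U \<Longrightarrow> \<phi> q = c"
  shows "pd i \<phi> p = 0"
  using pd_cong_open[of U p \<phi> "\<lambda>_. c" i] assms pd_const by simp

section \<open>Symmetry of mixed partial derivatives\<close>

lemma has_derivative_along_line:
  fixes \<phi> :: "'a::real_normed_vector \<Rightarrow> 'b::real_normed_vector"
  assumes "\<phi> differentiable at (x + s *\<^sub>R v)"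
  shows "((\<lambda>s. \<phi> (x + s *\<^sub>R v)) has_derivative
           (\<lambda>h. h *\<^sub>R frechet_derivative \<phi> (at (x + s *\<^sub>R v)) v)) (at s within S)"
proof -
  have "((\<lambda>s. x + s *\<^sub>R v) has_derivative (\<lambda>h. h *\<^sub>R v)) (at s within S)"
    by (auto intro!: derivative_eq_intros)
  from has_derivative_compose[OF this differentiable_has_frechet_derivative[OF assms]]
  show ?thesis
    using linear_frechet_derivative[OF assms] by (simp add: linear_scale)
qed

lemma second_difference_mean_value:
  fixes \<phi> :: "'a::real_normed_vector \<Rightarrow> 'b::real_normed_vector"
  assumes t: "0 \<le> t"
    and diff: "\<And>\<sigma>. \<sigma> \<in> {0..t} \<Longrightarrow> \<phi> differentiable at (x + \<sigma> *\<^sub>R a) \<and> \<phi> differentiable at (y + \<sigma> *\<^sub>R a)"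
    and bound: "\<And>\<sigma>. \<sigma> \<in> {0..t} \<Longrightarrow>
      norm (frechet_derivative \<phi> (at (y + \<sigma> *\<^sub>R a)) a - frechet_derivative \<phi> (at (x + \<sigma> *\<^sub>R a)) a - w) \<le> B"
  shows "norm (\<phi> (y + t *\<^sub>R a) - \<phi> (x + t *\<^sub>R a) - \<phi> y + \<phi> x - t *\<^sub>R w) \<le> B * t"
proof -
  define \<beta> where "\<beta> \<sigma> = \<phi> (y + \<sigma> *\<^sub>R a) - \<phi> (x + \<sigma> *\<^sub>R a) - \<sigma> *\<^sub>R w" for \<sigma>
  define V where
    "V \<sigma> = frechet_derivative \<phi> (at (y + \<sigma> *\<^sub>R a)) a - frechet_derivative \<phi> (at (x + \<sigma> *\<^sub>R a)) a - w"
    for \<sigma>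
  have "(\<beta> has_derivative (\<lambda>h. h *\<^sub>R V \<sigma>)) (at \<sigma> within {0..t})" if "\<sigma> \<in> {0..t}" for \<sigma>
  proof -
    have "(\<beta> has_derivative (\<lambda>h. h *\<^sub>R frechet_derivative \<phi> (at (y + \<sigma> *\<^sub>R a)) a
        - h *\<^sub>R frechet_derivative \<phi> (at (x + \<sigma> *\<^sub>R a)) a - h *\<^sub>R w)) (at \<sigma> within {0..t})"
      unfolding \<beta>_def[abs_def] using diff[OF that]
      by (intro has_derivative_diff has_derivative_along_line has_derivative_ident
          bounded_linear.has_derivative[OF bounded_linear_scaleR_left]) auto
    then show ?thesis
      by (rule has_derivative_eq_rhs) (simp add: fun_eq_iff V_def algebra_simps)
  qed
  moreover have "onorm (\<lambda>h. h *\<^sub>R V \<sigma>) \<le> B" if "\<sigma> \<in> {0..t}" for \<sigma>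
    using onorm_le[of "\<lambda>h. h *\<^sub>R V \<sigma>" "norm (V \<sigma>)"] bound[OF that] unfolding V_def
    by (simp add: mult.commute)
  ultimately have "norm (\<beta> t - \<beta> 0) \<le> B * norm (t - 0)"
    using t by (intro differentiable_bound[of "{0..t}"]) auto
  then show ?thesis
    using t unfolding \<beta>_def by (simp add: algebra_simps)
qed

lemma linearization_error_on_parallelogram:
  fixes A :: "'a::real_normed_vector \<Rightarrow> 'b::real_normed_vector"
  assumes U: "open U" "p \<in> U" and DA: "(A has_derivative DA) (at p)" and e: "e > 0"
  obtains \<delta> where "\<delta> > 0" and "\<And>t \<sigma> \<tau>. 0 < t \<Longrightarrow> t < \<delta> \<Longrightarrow> \<sigma> \<in> {0..t} \<Longrightarrow> \<tau> \<in> {0..t} \<Longrightarrow>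
    p + (\<sigma> *\<^sub>R a + \<tau> *\<^sub>R b) \<in> U \<and>
    norm (A (p + (\<sigma> *\<^sub>R a + \<tau> *\<^sub>R b)) - A p - DA (\<sigma> *\<^sub>R a + \<tau> *\<^sub>R b)) \<le> e * t"
proof -
  define c where "c = norm a + norm b + 1"
  have c: "c > 0" unfolding c_def by (simp add: add_nonneg_pos)
  then have "e / c > 0" using e by simp
  then obtain d where d: "d > 0" and
    approx: "\<And>y. norm (y - p) < d \<Longrightarrow> norm (A y - A p - DA (y - p)) \<le> e / c * norm (y - p)"
    using DA[unfolded has_derivative_at_alt] by blast
  obtain r where r: "r > 0" "ball p r \<subseteq> U" using U open_contains_ball by blast
  show thesis
  proof
    show "min d r / c > 0" using d r c by simp
  next
    fix t \<sigma> \<tau> assume t: "0 < t" "t < min d r / c" and \<sigma>\<tau>: "\<sigma> \<in> {0..t}" "\<tau> \<in> {0..t}"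
    define v where "v = \<sigma> *\<^sub>R a + \<tau> *\<^sub>R b"
    have small: "norm v \<le> t * c"
      using norm_triangle_ineq[of "\<sigma> *\<^sub>R a" "\<tau> *\<^sub>R b"] \<sigma>\<tau>
        mult_right_mono[of \<sigma> t "norm a"] mult_right_mono[of \<tau> t "norm b"]
      by (simp add: v_def c_def algebra_simps)
    then have near: "norm v < min d r"
      using t c by (simp add: field_simps)
    then have "dist p (p + v) < r"
      by (simp add: dist_norm norm_minus_commute)
    then show "p + v \<in> U \<and> norm (A (p + v) - A p - DA v) \<le> e * t"
      using r approx[of "p + v"] near mult_left_mono[OF small, of "e / c"] e c by auto
  qed
qed

lemma mixed_second_difference_estimate:
  fixes \<phi> :: "'a::real_normed_vector \<Rightarrow> 'b::real_normed_vector"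
  assumes U: "open U" "p \<in> U" and diff: "\<And>q. q \<in> U \<Longrightarrow> \<phi> differentiable at q"
    and DA: "((\<lambda>q. frechet_derivative \<phi> (at q) a) has_derivative DA) (at p)"
    and e: "e > 0"
  obtains \<delta> where "\<delta> > 0" and "\<And>t. 0 < t \<Longrightarrow> t < \<delta> \<Longrightarrow>
    norm (\<phi> (p + t *\<^sub>R a + t *\<^sub>R b) - \<phi> (p + t *\<^sub>R a) - \<phi> (p + t *\<^sub>R b) + \<phi> p - (t * t) *\<^sub>R DA b)
      \<le> e * (t * t)"
proof -
  define A where "A q = frechet_derivative \<phi> (at q) a" for q
  interpret DA: linear DA using DA by (rule has_derivative_linear)
  obtain \<delta> where \<delta>: "\<delta> > 0" and lin: "\<And>t \<sigma> \<tau>. 0 < t \<Longrightarrow> t < \<delta> \<Longrightarrow> \<sigma> \<in> {0..t} \<Longrightarrow> \<tau> \<in> {0..t} \<Longrightarrow>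
      p + (\<sigma> *\<^sub>R a + \<tau> *\<^sub>R b) \<in> U \<and>
      norm (A (p + (\<sigma> *\<^sub>R a + \<tau> *\<^sub>R b)) - A p - DA (\<sigma> *\<^sub>R a + \<tau> *\<^sub>R b)) \<le> e / 2 * t"
    using linearization_error_on_parallelogram[OF U DA[folded A_def], of "e / 2"] e by auto
  show thesis
  proof (rule that[OF \<delta>])
    fix t assume t: "0 < t" "t < \<delta>"
    have "norm (A ((p + t *\<^sub>R b) + \<sigma> *\<^sub>R a) - A (p + \<sigma> *\<^sub>R a) - t *\<^sub>R DA b) \<le> e * t"
      if \<sigma>: "\<sigma> \<in> {0..t}" for \<sigma>
    proof -
      \<comment> \<open>by linearity of \<open>DA\<close>, two linearization errors at \<open>p\<close>\<close>
      have "A ((p + t *\<^sub>R b) + \<sigma> *\<^sub>R a) - A (p + \<sigma> *\<^sub>R a) - t *\<^sub>R DA b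
          = (A (p + (\<sigma> *\<^sub>R a + t *\<^sub>R b)) - A p - DA (\<sigma> *\<^sub>R a + t *\<^sub>R b))
            - (A (p + (\<sigma> *\<^sub>R a + 0 *\<^sub>R b)) - A p - DA (\<sigma> *\<^sub>R a + 0 *\<^sub>R b))"
        by (simp add: DA.add DA.scale algebra_simps)
      also have "norm \<dots> \<le> e / 2 * t + e / 2 * t"
        by (rule order_trans[OF norm_triangle_ineq4 add_mono])
          (use lin[OF t \<sigma>, of t] lin[OF t \<sigma>, of 0] t in auto)
      finally show ?thesis by simp
    qed
    moreover have "\<phi> differentiable at (p + \<sigma> *\<^sub>R a) \<and> \<phi> differentiable at ((p + t *\<^sub>R b) + \<sigma> *\<^sub>R a)"
      if \<sigma>: "\<sigma> \<in> {0..t}" for \<sigma>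
      using diff lin[OF t \<sigma>, of t] lin[OF t \<sigma>, of 0] t by (auto simp: add_ac)
    ultimately have "norm (\<phi> ((p + t *\<^sub>R b) + t *\<^sub>R a) - \<phi> (p + t *\<^sub>R a) - \<phi> (p + t *\<^sub>R b) + \<phi> p
        - t *\<^sub>R (t *\<^sub>R DA b)) \<le> e * t * t"
      using second_difference_mean_value[where x = p and y = "p + t *\<^sub>R b" and w = "t *\<^sub>R DA b"
          and B = "e * t"] t
      unfolding A_def by simp
    then show "norm (\<phi> (p + t *\<^sub>R a + t *\<^sub>R b) - \<phi> (p + t *\<^sub>R a) - \<phi> (p + t *\<^sub>R b) + \<phi> p
        - (t * t) *\<^sub>R DA b) \<le> e * (t * t)"
      by (simp add: add_ac mult.assoc)
  qed
qed

theorem directional_derivatives_commute: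
  fixes \<phi> :: "'a::real_normed_vector \<Rightarrow> 'b::real_normed_vector"
  assumes U: "open U" "p \<in> U" and diff: "\<And>q. q \<in> U \<Longrightarrow> \<phi> differentiable at q"
    and "(\<lambda>q. frechet_derivative \<phi> (at q) a) differentiable at p"
    and "(\<lambda>q. frechet_derivative \<phi> (at q) b) differentiable at p"
  shows "frechet_derivative (\<lambda>q. frechet_derivative \<phi> (at q) a) (at p) b =
         frechet_derivative (\<lambda>q. frechet_derivative \<phi> (at q) b) (at p) a"
    (is "?DA b = ?DB a")
proof -
  note DA = differentiable_has_frechet_derivative[OF assms(4)]
  note DB = differentiable_has_frechet_derivative[OF assms(5)]
  have "norm (?DA b - ?DB a) \<le> 0 + e" if e: "e > 0" for e
  proof -
    obtain \<delta>1 where \<delta>1: "\<delta>1 > 0" "\<And>t. 0 < t \<Longrightarrow> t < \<delta>1 \<Longrightarrow>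
        norm (\<phi> (p + t *\<^sub>R a + t *\<^sub>R b) - \<phi> (p + t *\<^sub>R a) - \<phi> (p + t *\<^sub>R b) + \<phi> p - (t * t) *\<^sub>R ?DA b)
          \<le> e / 2 * (t * t)"
      using mixed_second_difference_estimate[OF U diff DA, of "e / 2" b] e by auto
    obtain \<delta>2 where \<delta>2: "\<delta>2 > 0" "\<And>t. 0 < t \<Longrightarrow> t < \<delta>2 \<Longrightarrow>
        norm (\<phi> (p + t *\<^sub>R b + t *\<^sub>R a) - \<phi> (p + t *\<^sub>R b) - \<phi> (p + t *\<^sub>R a) + \<phi> p - (t * t) *\<^sub>R ?DB a)
          \<le> e / 2 * (t * t)"
      using mixed_second_difference_estimate[OF U diff DB, of "e / 2" a] e by auto
    define t where "t = min \<delta>1 \<delta>2 / 2"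
    have t: "0 < t" "t < \<delta>1" "t < \<delta>2" using \<delta>1 \<delta>2 by (auto simp: t_def)
    define \<Delta> where "\<Delta> = \<phi> (p + t *\<^sub>R a + t *\<^sub>R b) - \<phi> (p + t *\<^sub>R a) - \<phi> (p + t *\<^sub>R b) + \<phi> p"
    have \<Delta>_swap: "\<Delta> = \<phi> (p + t *\<^sub>R b + t *\<^sub>R a) - \<phi> (p + t *\<^sub>R b) - \<phi> (p + t *\<^sub>R a) + \<phi> p"
      unfolding \<Delta>_def by (simp add: algebra_simps)
    have "(t * t) * norm (?DA b - ?DB a) = norm ((\<Delta> - (t * t) *\<^sub>R ?DB a) - (\<Delta> - (t * t) *\<^sub>R ?DA b))"
      using t by (simp add: algebra_simps flip: scaleR_diff_right)
    also have "\<dots> \<le> norm (\<Delta> - (t * t) *\<^sub>R ?DB a) + norm (\<Delta> - (t * t) *\<^sub>R ?DA b)"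
      by (rule norm_triangle_ineq4)
    also have "\<dots> \<le> e / 2 * (t * t) + e / 2 * (t * t)"
      using \<delta>2(2)[OF t(1,3)] \<delta>1(2)[OF t(1,2)] unfolding \<Delta>_swap[symmetric] \<Delta>_def
      by (rule add_mono)
    finally show ?thesis using t by simp
  qed
  then show ?thesis using field_le_epsilon[of "norm (?DA b - ?DB a)" 0] by simp
qed

corollary pd_commute:
  assumes "open U" "p \<in> U" "\<And>q. q \<in> U \<Longrightarrow> \<phi> differentiable at q"
    and "pd 0 \<phi> differentiable at p" "pd 1 \<phi> differentiable at p"
  shows "pd i (pd j \<phi>) p = pd j (pd i \<phi>) p"
proof -
  have pd_fun: "pd k \<phi> = (\<lambda>q. frechet_derivative \<phi> (at q) (coord_dir k))" for k
    by (simp add: pd_eq_frechet_derivative fun_eq_iff)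
  have "pd 1 (pd 0 \<phi>) p = pd 0 (pd 1 \<phi>) p"
    using directional_derivatives_commute[OF assms[unfolded pd_fun]]
    unfolding pd_fun by (simp add: pd_eq_frechet_derivative)
  then show ?thesis
    by (cases "i = 0"; cases "j = 0") (simp_all add: pd_eq_pd_1[of i] pd_eq_pd_1[of j])
qed

lemma sum_lessThan_2: "(\<Sum>k<2. a k) = a 0 + a (1::nat)"
  by (simp add: numeral_2_eq_2)

lemma gm_commute: "gm f i j q = gm f j i q"
  unfolding gm_def by (rule ip_commute)

lemma ginv_commute: "ginv f i j q = ginv f j i q"
  unfolding ginv_def by auto

locale lorentz_patch =
  fixes U :: "(real \<times> real) set" and f :: "real \<times> real \<Rightarrow> real^4"
  assumes open_U: "open U" and smooth: "smooth_on U f"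
    and detg_neg: "\<And>q. q \<in> U \<Longrightarrow> detg f q < 0"
begin

lemma differentiable_on_pd:
  "f differentiable_on U" "pd a f differentiable_on U" "pd a (pd b f) differentiable_on U"
proof -
  have "Ck_on 3 U f" using smooth unfolding smooth_on_def by blast
  then have "f differentiable_on U"
    and "pd 0 f differentiable_on U" "pd 1 f differentiable_on U"
    and "pd 0 (pd 0 f) differentiable_on U" "pd 1 (pd 0 f) differentiable_on U"
        "pd 0 (pd 1 f) differentiable_on U" "pd 1 (pd 1 f) differentiable_on U"
    by (simp_all add: numeral_3_eq_3)
  then show "f differentiable_on U" "pd a f differentiable_on U" "pd a (pd b f) differentiable_on U"
    by (cases "a = 0"; cases "b = 0"; simp add: pd_eq_pd_1[of a] pd_eq_pd_1[of b])+
qed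

lemma differentiable_on_imp_at: "\<phi> differentiable_on U \<Longrightarrow> q \<in> U \<Longrightarrow> \<phi> differentiable at q"
  using at_within_open[OF _ open_U] by (auto simp: differentiable_on_def)

lemma pd_f_differentiable: "q \<in> U \<Longrightarrow> pd a f differentiable at q"
  and pd2_f_differentiable: "q \<in> U \<Longrightarrow> pd a (pd b f) differentiable at q"
  using differentiable_on_imp_at differentiable_on_pd by blast+

lemma pd_f_commute: "q \<in> U \<Longrightarrow> pd i (pd j f) q = pd j (pd i f) q"
  using pd_commute[OF open_U] differentiable_on_imp_at differentiable_on_pd pd_f_differentiable
  by blast

lemma pd3_f_commute_outer: "q \<in> U \<Longrightarrow> pd i (pd j (pd k f)) q = pd j (pd i (pd k f)) q"
  using pd_commute[OF open_U] pd_f_differentiable pd2_f_differentiable by blast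

lemma pd3_f_commute_inner: "q \<in> U \<Longrightarrow> pd i (pd j (pd k f)) q = pd i (pd k (pd j f)) q"
  by (rule pd_cong_open[OF open_U]) (auto intro: pd_f_commute)

lemma detg_nonzero: assumes "q \<in> U" shows "detg f q \<noteq> 0"
  using detg_neg[OF assms] by simp

lemma detg_eq: "detg f q = gm f 0 0 q * gm f 1 1 q - gm f 0 1 q * gm f 0 1 q"
  unfolding detg_def using gm_commute[of f 1 0 q] by simp

lemma gm_differentiable: "q \<in> U \<Longrightarrow> gm f j l differentiable at q"
  unfolding gm_def[abs_def] by (rule differentiable_bilinear[OF bounded_bilinear_ip pd_f_differentiable pd_f_differentiable])

lemma pd_gm:
  "q \<in> U \<Longrightarrow> pd i (gm f j l) q = ip (pd i (pd j f) q) (pd l f q) + ip (pd j f q) (pd i (pd l f) q)"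
  unfolding gm_def[abs_def]
  by (rule pd_bilinear[OF bounded_bilinear_ip pd_f_differentiable pd_f_differentiable])

lemma chr_eq_ip: "q \<in> U \<Longrightarrow> chr f k i j q = (\<Sum>l<2. ginv f k l q * ip (pd i (pd j f) q) (pd l f q))"
proof -
  assume q: "q \<in> U"
  have "pd i (gm f j l) q + pd j (gm f i l) q - pd l (gm f i j) q = 2 * ip (pd i (pd j f) q) (pd l f q)" for l
    unfolding pd_gm[OF q] using pd_f_commute[OF q, of i j] pd_f_commute[OF q, of i l] pd_f_commute[OF q, of j l]
    by (simp add: ip_commute)
  then show ?thesis unfolding chr_def by (simp add: sum_distrib_left)
qed

lemma chr_commute: "q \<in> U \<Longrightarrow> chr f k i j q = chr f k j i q"
  unfolding chr_eq_ip using pd_f_commute by simp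

lemma ginv_gm_inverse:
  assumes q: "q \<in> U" and "k < 2" "m < 2"
  shows "(\<Sum>l<2. ginv f k l q * gm f l m q) = (if k = m then 1 else 0)"
proof -
  define d where "d = inverse (detg f q)"
  have d: "d * (gm f 0 0 q * gm f 1 1 q - gm f 0 1 q * gm f 0 1 q) = 1"
    unfolding d_def detg_eq[symmetric] using detg_nonzero[OF q] by simp
  have ginv: "ginv f i j q = (if i = 0 \<and> j = 0 then gm f 1 1 q
      else if i = 1 \<and> j = 1 then gm f 0 0 q else - gm f 0 1 q) * d" for i j
    unfolding ginv_def d_def by (simp add: divide_inverse)
  have "k = 0 \<or> k = 1" "m = 0 \<or> m = 1" using assms by auto
  then show ?thesis
    unfolding ginv sum_lessThan_2 using d gm_commute[of f 1 0 q]
    by (elim disjE) (simp_all add: algebra_simps)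
qed

definition tan_coord :: "real \<times> real \<Rightarrow> real^4 \<Rightarrow> nat \<Rightarrow> real" where
  "tan_coord q v k = (\<Sum>l<2. ginv f k l q * ip v (pd l f q))"

lemma nproj_eq: "nproj f q v = v - (\<Sum>k<2. tan_coord q v k *\<^sub>R pd k f q)"
  unfolding nproj_def tan_coord_def sum_lessThan_2 using ginv_commute[of f 1 0 q]
  by (simp add: algebra_simps)

lemma tan_coord_add: "tan_coord q (v + w) k = tan_coord q v k + tan_coord q w k"
  and tan_coord_diff: "tan_coord q (v - w) k = tan_coord q v k - tan_coord q w k"
  and tan_coord_scaleR: "tan_coord q (r *\<^sub>R v) k = r * tan_coord q v k"
  and tan_coord_zero: "tan_coord q 0 k = 0"
  unfolding tan_coord_def sum_lessThan_2 by (simp_all add: ip_bilinear_simps algebra_simps)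

lemma nproj_add: "nproj f q (v + w) = nproj f q v + nproj f q w"
  and nproj_diff: "nproj f q (v - w) = nproj f q v - nproj f q w"
  and nproj_scaleR: "nproj f q (r *\<^sub>R v) = r *\<^sub>R nproj f q v"
  and nproj_zero: "nproj f q 0 = 0"
  unfolding nproj_eq sum_lessThan_2 tan_coord_add tan_coord_diff tan_coord_scaleR tan_coord_zero
  by (simp_all add: algebra_simps)

lemma nproj_sum: "nproj f q (\<Sum>k\<in>A. v k) = (\<Sum>k\<in>A. nproj f q (v k))"
  by (induction A rule: infinite_finite_induct) (auto simp: nproj_add nproj_zero)

lemma tan_coord_pd_f:
  assumes "q \<in> U" "k < 2" "m < 2"
  shows "tan_coord q (pd m f q) k = (if k = m then 1 else 0)"
  using ginv_gm_inverse[OF assms] unfolding tan_coord_def gm_def by (simp add: ip_commute)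

lemma nproj_pd_f: assumes q: "q \<in> U" and "m < 2" shows "nproj f q (pd m f q) = 0"
proof -
  have "m = 0 \<or> m = 1" using assms by auto
  then show ?thesis
    unfolding nproj_eq sum_lessThan_2 using tan_coord_pd_f[OF q, of 0 m] tan_coord_pd_f[OF q, of 1 m] assms
    by auto
qed

lemma ip_nproj_pd_f:
  assumes q: "q \<in> U" and m: "m < 2"
  shows "ip (nproj f q v) (pd m f q) = 0"
proof -
  have "ip (nproj f q v) (pd m f q) = ip v (pd m f q) - (\<Sum>k<2. tan_coord q v k * gm f k m q)"
    unfolding nproj_eq by (simp add: ip_bilinear_simps gm_def)
  also have "(\<Sum>k<2. tan_coord q v k * gm f k m q)
      = (\<Sum>l<2. ip v (pd l f q) * (\<Sum>k<2. ginv f l k q * gm f k m q))"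
    unfolding tan_coord_def sum_lessThan_2 using ginv_commute[of f 1 0 q] by (simp add: algebra_simps)
  also have "\<dots> = ip v (pd m f q)"
    using ginv_gm_inverse[OF q _ m, of 0] ginv_gm_inverse[OF q _ m, of 1] m
    unfolding sum_lessThan_2 by (cases "m = 0") (auto simp: less_2_cases_iff)
  finally show ?thesis by simp
qed

lemma ip_nproj_normal:
  assumes "ip v (pd 0 f p) = 0" "ip v (pd 1 f p) = 0"
  shows "ip v (nproj f p e) = ip v e"
  unfolding nproj_eq sum_lessThan_2 using assms by (simp add: ip_bilinear_simps)

lemma nproj_normal:
  assumes "ip v (pd 0 f q) = 0" "ip v (pd 1 f q) = 0"
  shows "nproj f q v = v"
  unfolding nproj_eq tan_coord_def sum_lessThan_2 using assms by simp

lemma ip_sff_pd_f: "q \<in> U \<Longrightarrow> m < 2 \<Longrightarrow> ip (sff f i j q) (pd m f q) = 0"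
  unfolding sff_def by (rule ip_nproj_pd_f)

lemma nproj_sff: "q \<in> U \<Longrightarrow> nproj f q (sff f i j q) = sff f i j q"
  by (rule nproj_normal) (auto intro: ip_sff_pd_f)

lemma sff_commute: "q \<in> U \<Longrightarrow> sff f i j q = sff f j i q"
  unfolding sff_def using pd_f_commute by simp

lemma tan_coord_pd2_f: "q \<in> U \<Longrightarrow> tan_coord q (pd i (pd j f) q) k = chr f k i j q"
  unfolding tan_coord_def chr_eq_ip by simp

lemma gauss_formula:
  "q \<in> U \<Longrightarrow> pd i (pd j f) q = (\<Sum>k<2. chr f k i j q *\<^sub>R pd k f q) + sff f i j q"
  unfolding sff_def nproj_eq by (simp add: tan_coord_pd2_f)

lemma ip_pd2_f_pd_f:
  assumes q: "q \<in> U" and l: "l < 2"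
  shows "ip (pd a (pd b f) q) (pd l f q) = (\<Sum>k<2. gm f l k q * chr f k a b q)"
  unfolding gauss_formula[OF q] sum_lessThan_2 using ip_sff_pd_f[OF q l, of a b]
  by (simp add: ip_bilinear_simps gm_def ip_commute[of "pd l f q"] mult.commute)

lemma ip_pd2_f_pd2_f:
  assumes q: "q \<in> U"
  shows "ip (pd a (pd b f) q) (pd c (pd d f) q) =
    (\<Sum>k<2. \<Sum>l<2. chr f k a b q * chr f l c d q * gm f k l q) + ip (sff f a b q) (sff f c d q)"
proof -
  have "ip (sff f a b q) (pd k f q) = 0" "ip (pd k f q) (sff f c d q) = 0" if "k < 2" for k
    using ip_sff_pd_f[OF q that] by (auto simp: ip_commute)
  then show ?thesis
    unfolding gauss_formula[OF q, of a b] gauss_formula[OF q, of c d] sum_lessThan_2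
    by (simp add: ip_bilinear_simps gm_def algebra_simps)
qed

lemma ip_sff_pd2_f:
  assumes q: "q \<in> U"
  shows "ip (sff f i a q) (pd j (pd l f) q) = ip (sff f i a q) (sff f j l q)"
  unfolding gauss_formula[OF q, of j l] sum_lessThan_2
  using ip_sff_pd_f[OF q, of 0 i a] ip_sff_pd_f[OF q, of 1 i a]
  by (simp add: ip_bilinear_simps)

lemma detg_differentiable: "q \<in> U \<Longrightarrow> detg f differentiable at q"
  unfolding detg_def[abs_def]
  by (intro differentiable_diff differentiable_bilinear[OF bounded_bilinear_mult] gm_differentiable)

lemma pd_detg_expand:
  assumes q: "q \<in> U"
  shows "pd i (detg f) q = pd i (gm f 0 0) q * gm f 1 1 q + gm f 0 0 q * pd i (gm f 1 1) q
     - (pd i (gm f 0 1) q * gm f 1 0 q + gm f 0 1 q * pd i (gm f 1 0) q)"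
  unfolding detg_def[abs_def]
  by (simp add: pd_diff differentiable_bilinear[OF bounded_bilinear_mult] gm_differentiable[OF q]
      pd_bilinear[OF bounded_bilinear_mult gm_differentiable[OF q] gm_differentiable[OF q]])

lemma pd_detg:
  assumes q: "q \<in> U"
  shows "pd i (detg f) q = 2 * detg f q * (chr f 0 i 0 q + chr f 1 i 1 q)"
  unfolding pd_detg_expand[OF q] pd_gm[OF q] chr_eq_ip[OF q] sum_lessThan_2 ginv_def
  using detg_nonzero[OF q] gm_commute[of f 1 0 q] gm_commute[of f "Suc 0" 0 q]
  by (simp add: ip_commute[of "pd _ f q"] field_simps)

definition adj_gm :: "nat \<Rightarrow> nat \<Rightarrow> real \<times> real \<Rightarrow> real" where
  "adj_gm k l = (if k = 0 \<and> l = 0 then gm f 1 1 else if k = 1 \<and> l = 1 then gm f 0 0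
     else (\<lambda>q. - gm f 0 1 q))"

lemma ginv_eq_adj_gm: "ginv f k l = (\<lambda>q. adj_gm k l q / detg f q)"
  unfolding ginv_def[abs_def] adj_gm_def by auto

lemma adj_gm_differentiable: "q \<in> U \<Longrightarrow> adj_gm k l differentiable at q"
  unfolding adj_gm_def by (auto intro!: gm_differentiable differentiable_minus)

lemma ginv_differentiable: "q \<in> U \<Longrightarrow> ginv f k l differentiable at q"
  unfolding ginv_eq_adj_gm
  by (rule pd_divide(2)[OF adj_gm_differentiable detg_differentiable detg_nonzero])

lemma pd_ginv:
  assumes q: "q \<in> U" and "k < 2" "l < 2"
  shows "pd a (ginv f k l) q = - (\<Sum>m<2. ginv f k m q * chr f l a m q + chr f k a m q * ginv f m l q)"
proof -
  have pd_adj: "pd a (adj_gm k l) q = (if k = 0 \<and> l = 0 then pd a (gm f 1 1) q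
      else if k = 1 \<and> l = 1 then pd a (gm f 0 0) q else - pd a (gm f 0 1) q)"
    unfolding adj_gm_def by (auto simp: pd_minus gm_differentiable[OF q])
  have "k = 0 \<or> k = 1" "l = 0 \<or> l = 1" using assms by auto
  then show ?thesis
    unfolding ginv_eq_adj_gm pd_divide(1)[OF adj_gm_differentiable[OF q] detg_differentiable[OF q]
        detg_nonzero[OF q]] pd_adj pd_detg_expand[OF q]
    unfolding pd_gm[OF q] chr_eq_ip[OF q] sum_lessThan_2 ginv_def adj_gm_def
    using detg_nonzero[OF q] detg_eq[of q] gm_commute[of f 1 0 q] gm_commute[of f "Suc 0" 0 q]
    by (elim disjE; simp add: ip_commute[of "pd _ f q"] field_simps power2_eq_square;
        simp add: detg_eq algebra_simps)
qed

definition inv_sqrt_det :: "real \<times> real \<Rightarrow> real" where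
  "inv_sqrt_det q = inverse (sqrt (- detg f q))"

definition tangent_bivector :: "real \<times> real \<Rightarrow> real^4^4" where
  "tangent_bivector q = wedge (pd 0 f q) (pd 1 f q)"

definition sff_bivector :: "nat \<Rightarrow> real \<times> real \<Rightarrow> real^4^4" where
  "sff_bivector i q = wedge (sff f i 0 q) (pd 1 f q) + wedge (pd 0 f q) (sff f i 1 q)"

lemma gauss_map_eq: "gauss_map f = (\<lambda>q. inv_sqrt_det q *\<^sub>R tangent_bivector q)"
  unfolding gauss_map_def[abs_def] inv_sqrt_det_def tangent_bivector_def
  by (simp add: inverse_eq_divide)

lemma inv_sqrt_det_pos: "q \<in> U \<Longrightarrow> inv_sqrt_det q > 0"
  unfolding inv_sqrt_det_def using detg_neg by simp

lemma inv_sqrt_det_differentiable: "q \<in> U \<Longrightarrow> inv_sqrt_det differentiable at q"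
  unfolding inv_sqrt_det_def[abs_def]
  by (rule pd_comp_real(2)[OF DERIV_inverse_sqrt_minus[OF detg_neg] detg_differentiable])

lemma pd_inv_sqrt_det:
  assumes q: "q \<in> U"
  shows "pd i inv_sqrt_det q = - inv_sqrt_det q * (chr f 0 i 0 q + chr f 1 i 1 q)"
proof -
  have sq: "inv_sqrt_det q * inv_sqrt_det q * detg f q = -1"
    unfolding inv_sqrt_det_def using detg_neg[OF q] by (simp add: field_simps)
  have "pd i inv_sqrt_det q = pd i (detg f) q * (inv_sqrt_det q ^ 3 / 2)"
    unfolding inv_sqrt_det_def[abs_def]
    by (rule pd_comp_real(1)[OF DERIV_inverse_sqrt_minus[OF detg_neg[OF q]] detg_differentiable[OF q]])
  also have "\<dots> = (inv_sqrt_det q * inv_sqrt_det q * detg f q) * inv_sqrt_det q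
      * (chr f 0 i 0 q + chr f 1 i 1 q)"
    unfolding pd_detg[OF q] by (simp add: power3_eq_cube algebra_simps)
  finally show ?thesis using sq by simp
qed

lemma tangent_bivector_differentiable: "q \<in> U \<Longrightarrow> tangent_bivector differentiable at q"
  unfolding tangent_bivector_def[abs_def]
  by (rule differentiable_bilinear[OF bounded_bilinear_wedge pd_f_differentiable pd_f_differentiable])

lemma pd_tangent_bivector:
  assumes q: "q \<in> U"
  shows "pd i tangent_bivector q = (chr f 0 i 0 q + chr f 1 i 1 q) *\<^sub>R tangent_bivector q + sff_bivector i q"
proof -
  have "pd i tangent_bivector q = wedge (pd i (pd 0 f) q) (pd 1 f q) + wedge (pd 0 f q) (pd i (pd 1 f) q)"
    unfolding tangent_bivector_def[abs_def]
    by (rule pd_bilinear[OF bounded_bilinear_wedge pd_f_differentiable[OF q] pd_f_differentiable[OF q]])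
  then show ?thesis
    unfolding gauss_formula[OF q] sum_lessThan_2 tangent_bivector_def sff_bivector_def
    by (simp add: wedge_add_left wedge_add_right wedge_scaleR_left wedge_scaleR_right wedge_self
        algebra_simps)
qed

text \<open>The trace terms of the two factors cancel, so only the normal part of \<open>\<partial>\<^sub>i(f\<^sub>0 \<and> f\<^sub>1)\<close> survives.\<close>

lemma pd_gauss_map:
  assumes q: "q \<in> U"
  shows "pd i (gauss_map f) q = inv_sqrt_det q *\<^sub>R sff_bivector i q"
proof -
  have "pd i (gauss_map f) q = pd i inv_sqrt_det q *\<^sub>R tangent_bivector q
      + inv_sqrt_det q *\<^sub>R pd i tangent_bivector q"
    unfolding gauss_map_eq
    by (rule pd_bilinear[OF bounded_bilinear_scaleR inv_sqrt_det_differentiable[OF q]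
          tangent_bivector_differentiable[OF q]])
  then show ?thesis
    unfolding pd_inv_sqrt_det[OF q] pd_tangent_bivector[OF q] by (simp add: algebra_simps)
qed

lemma sff_eq: "sff f i a = (\<lambda>q. pd i (pd a f) q - (\<Sum>k<2. tan_coord q (pd i (pd a f) q) k *\<^sub>R pd k f q))"
  unfolding sff_def[abs_def] nproj_eq by simp

lemma tan_coord_pd2_f_differentiable:
  "q \<in> U \<Longrightarrow> (\<lambda>q. tan_coord q (pd i (pd a f) q) k) differentiable at q"
  unfolding tan_coord_def
  by (intro differentiable_sum' differentiable_bilinear[OF bounded_bilinear_mult] ginv_differentiable
      differentiable_bilinear[OF bounded_bilinear_ip] pd_f_differentiable pd2_f_differentiable)

lemma sff_differentiable: "q \<in> U \<Longrightarrow> sff f i a differentiable at q"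
  unfolding sff_eq
  by (intro differentiable_diff differentiable_sum' differentiable_bilinear[OF bounded_bilinear_scaleR]
      tan_coord_pd2_f_differentiable pd_f_differentiable pd2_f_differentiable)

lemma nproj_pd_sff:
  assumes q: "q \<in> U"
  shows "nproj f q (pd j (sff f i a) q) =
    nproj f q (pd j (pd i (pd a f)) q) - (\<Sum>l<2. chr f l i a q *\<^sub>R sff f j l q)"
proof -
  have "pd j (sff f i a) q = pd j (pd i (pd a f)) q -
      (\<Sum>k<2. pd j (\<lambda>q. tan_coord q (pd i (pd a f) q) k) q *\<^sub>R pd k f q
        + tan_coord q (pd i (pd a f) q) k *\<^sub>R pd j (pd k f) q)"
    unfolding sff_eq
    by (simp add: pd_diff pd_sum differentiable_sum' differentiable_bilinear[OF bounded_bilinear_scaleR]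
        tan_coord_pd2_f_differentiable[OF q] pd_f_differentiable[OF q] pd2_f_differentiable[OF q]
        pd_bilinear[OF bounded_bilinear_scaleR tan_coord_pd2_f_differentiable[OF q] pd_f_differentiable[OF q]])
  then show ?thesis
    unfolding sum_lessThan_2 using nproj_pd_f[OF q, of 0] nproj_pd_f[OF q, of 1]
    by (simp add: nproj_diff nproj_add nproj_scaleR tan_coord_pd2_f[OF q] sff_def)
qed

lemma ip_pd_sff_pd_f:
  assumes q: "q \<in> U" and l: "l < 2"
  shows "ip (pd j (sff f i a) q) (pd l f q) = - ip (sff f i a q) (sff f j l q)"
proof -
  have "pd j (\<lambda>q. ip (sff f i a q) (pd l f q)) q = 0"
    by (rule pd_eq_0_if_constant_on_open[OF open_U q]) (use ip_sff_pd_f l in auto)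
  moreover have "pd j (\<lambda>q. ip (sff f i a q) (pd l f q)) q =
      ip (pd j (sff f i a) q) (pd l f q) + ip (sff f i a q) (pd j (pd l f) q)"
    by (rule pd_bilinear[OF bounded_bilinear_ip sff_differentiable[OF q] pd_f_differentiable[OF q]])
  ultimately show ?thesis using ip_sff_pd2_f[OF q] by simp
qed

lemma weingarten_formula:
  assumes q: "q \<in> U"
  shows "pd j (sff f i a) q =
      (\<Sum>k<2. (- (\<Sum>l<2. ginv f k l q * ip (sff f i a q) (sff f j l q))) *\<^sub>R pd k f q)
    + (nproj f q (pd j (pd i (pd a f)) q) - (\<Sum>l<2. chr f l i a q *\<^sub>R sff f j l q))"
proof -
  have "pd j (sff f i a) q = nproj f q (pd j (sff f i a) q)
      + (\<Sum>k<2. tan_coord q (pd j (sff f i a) q) k *\<^sub>R pd k f q)"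
    unfolding nproj_eq by simp
  also have "(\<Sum>k<2. tan_coord q (pd j (sff f i a) q) k *\<^sub>R pd k f q)
     = (\<Sum>k<2. (- (\<Sum>l<2. ginv f k l q * ip (sff f i a q) (sff f j l q))) *\<^sub>R pd k f q)"
    unfolding tan_coord_def sum_lessThan_2 using ip_pd_sff_pd_f[OF q, of 0] ip_pd_sff_pd_f[OF q, of 1]
    by simp
  finally show ?thesis unfolding nproj_pd_sff[OF q] by simp
qed

lemma mean_curv_differentiable: "q \<in> U \<Longrightarrow> mean_curv f differentiable at q"
  unfolding mean_curv_def[abs_def]
  by (intro differentiable_sum' differentiable_bilinear[OF bounded_bilinear_scaleR] differentiable_const
      ginv_differentiable sff_differentiable)

lemma ip_mean_curv_pd_f: "q \<in> U \<Longrightarrow> m < 2 \<Longrightarrow> ip (mean_curv f q) (pd m f q) = 0"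
  unfolding mean_curv_def by (simp add: ip_bilinear_simps ip_sff_pd_f)

lemma nproj_pd_mean_curv:
  assumes q: "q \<in> U"
  shows "nproj f q (pd a (mean_curv f) q) = (1/2) *\<^sub>R (\<Sum>i<2. \<Sum>j<2. pd a (ginv f i j) q *\<^sub>R sff f i j q
     + ginv f i j q *\<^sub>R (nproj f q (pd a (pd i (pd j f)) q) - (\<Sum>l<2. chr f l i j q *\<^sub>R sff f a l q)))"
proof -
  have "pd a (mean_curv f) q = (1/2) *\<^sub>R (\<Sum>i<2. \<Sum>j<2. pd a (ginv f i j) q *\<^sub>R sff f i j q
     + ginv f i j q *\<^sub>R pd a (sff f i j) q)"
    unfolding mean_curv_def[abs_def]
    by (simp add: pd_bilinear[OF bounded_bilinear_scaleR differentiable_const] pd_const pd_sum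
        differentiable_sum' differentiable_bilinear[OF bounded_bilinear_scaleR]
        ginv_differentiable[OF q] sff_differentiable[OF q]
        pd_bilinear[OF bounded_bilinear_scaleR ginv_differentiable[OF q] sff_differentiable[OF q]])
  then show ?thesis
    by (simp add: nproj_scaleR nproj_sum nproj_add nproj_sff[OF q] nproj_pd_sff[OF q])
qed

end

section \<open>The Laplacian of the Gauss map\<close>

text \<open>The computation of \<open>\<Delta>G\<close> at one point, as pure algebra: the frame \<open>x\<^sub>k = f\<^sub>k\<close>, the second
  fundamental form \<open>h\<close>, the normal parts \<open>n\<close> of the third derivatives, \<open>g\<^sup>i\<^sup>j\<close>, the Christoffel
  symbols \<open>G\<close>, \<open>s = (-det g)\<^sup>-\<^sup>1\<^sup>/\<^sup>2\<close> and all derivatives are independent unknowns, tied together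
  only by the Gauss and Weingarten formulas (\<open>F\<close>, \<open>Dh\<close>), the derivatives of \<open>g\<^sup>i\<^sup>j\<close> and \<open>s\<close>,
  the normal derivative \<open>DH\<close> of the mean curvature vector and the symmetries.\<close>

lemma laplacian_bivector_identity:
  fixes x :: "nat \<Rightarrow> real^4" and h :: "nat \<Rightarrow> nat \<Rightarrow> real^4" and n :: "nat \<Rightarrow> nat \<Rightarrow> nat \<Rightarrow> real^4"
    and gi :: "nat \<Rightarrow> nat \<Rightarrow> real" and G :: "nat \<Rightarrow> nat \<Rightarrow> nat \<Rightarrow> real" and s :: real
    and P :: "nat \<Rightarrow> real^4^4" and dP :: "nat \<Rightarrow> nat \<Rightarrow> real^4^4" and F :: "nat \<Rightarrow> nat \<Rightarrow> real^4"
    and Dh :: "nat \<Rightarrow> nat \<Rightarrow> nat \<Rightarrow> real^4" and dgi :: "nat \<Rightarrow> nat \<Rightarrow> nat \<Rightarrow> real"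
    and DH :: "nat \<Rightarrow> real^4" and ds :: "nat \<Rightarrow> real"
  assumes h_sym: "h 1 0 = h 0 1" and gi_sym: "gi 1 0 = gi 0 1" and G_sym: "\<And>k. G k 1 0 = G k 0 1"
    and n_sym: "n 0 1 0 = n 0 0 1" "n 1 0 0 = n 0 0 1" "n 1 0 1 = n 0 1 1" "n 1 1 0 = n 0 1 1"
    and P: "\<And>j. P j = wedge (h j 0) (x 1) + wedge (x 0) (h j 1)"
    and F: "\<And>i b. F i b = (\<Sum>k<2. G k i b *\<^sub>R x k) + h i b"
    and Dh: "\<And>i j a. Dh i j a = (\<Sum>k<2. (- (\<Sum>l<2. gi k l * ip (h j a) (h i l))) *\<^sub>R x k)
                  + (n i j a - (\<Sum>l<2. G l j a *\<^sub>R h i l))"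
    and dP: "\<And>i j. dP i j = wedge (Dh i j 0) (x 1) + wedge (h j 0) (F i 1)
                  + wedge (F i 0) (h j 1) + wedge (x 0) (Dh i j 1)"
    and dgi: "\<And>a i j. i < 2 \<Longrightarrow> j < 2 \<Longrightarrow> dgi a i j = - (\<Sum>k<2. gi i k * G j a k + G i a k * gi k j)"
    and DH: "\<And>a. DH a = (1/2) *\<^sub>R (\<Sum>i<2. \<Sum>j<2. dgi a i j *\<^sub>R h i j
                  + gi i j *\<^sub>R (n a i j - (\<Sum>l<2. G l i j *\<^sub>R h a l)))"
    and ds: "\<And>i. ds i = - s * (G 0 i 0 + G 1 i 1)"
  shows "- (\<Sum>i<2. \<Sum>j<2. gi i j *\<^sub>R (ds i *\<^sub>R P j + s *\<^sub>R dP i j - (\<Sum>k<2. G k i j *\<^sub>R (s *\<^sub>R P k))))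
    = ((\<Sum>i<2. \<Sum>j<2. \<Sum>k<2. \<Sum>l<2. gi i j * gi k l * ip (h i k) (h j l)) * s) *\<^sub>R wedge (x 0) (x 1)
      - (2 * s) *\<^sub>R (wedge (DH 0) (x 1) - wedge (DH 1) (x 0))
      - (2 * s) *\<^sub>R (gi 0 0 *\<^sub>R wedge (h 0 0) (h 0 1) + gi 0 1 *\<^sub>R wedge (h 0 0) (h 1 1)
          + gi 1 1 *\<^sub>R wedge (h 0 1) (h 1 1))"
proof -
  have sym: "h (Suc 0) 0 = h 0 (Suc 0)" "gi (Suc 0) 0 = gi 0 (Suc 0)" "\<And>k. G k (Suc 0) 0 = G k 0 (Suc 0)"
    "n 0 (Suc 0) 0 = n 0 0 (Suc 0)" "n (Suc 0) 0 0 = n 0 0 (Suc 0)"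
    "n (Suc 0) 0 (Suc 0) = n 0 (Suc 0) (Suc 0)" "n (Suc 0) (Suc 0) 0 = n 0 (Suc 0) (Suc 0)"
    using h_sym gi_sym G_sym n_sym by simp_all
  have ip_sym: "ip (h 1 1) (h 0 0) = ip (h 0 0) (h 1 1)" "ip (h 0 1) (h 0 0) = ip (h 0 0) (h 0 1)"
    "ip (h 1 1) (h 0 1) = ip (h 0 1) (h 1 1)"
    by (simp_all add: ip_commute)
  show ?thesis
    unfolding vec_eq_iff
    by (simp add: P F Dh dP dgi DH ds sum_lessThan_2 sym wedge_component ip_sym)
      (simp add: field_simps sym ip_sym[simplified])
qed

context lorentz_patch
begin

definition sff_norm2 :: "real \<times> real \<Rightarrow> real" where
  "sff_norm2 q = (\<Sum>i<2. \<Sum>j<2. \<Sum>k<2. \<Sum>l<2.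
     ginv f i j q * ginv f k l q * ip (sff f i k q) (sff f j l q))"

definition normal_bivector :: "real \<times> real \<Rightarrow> real^4^4" where
  "normal_bivector q = ginv f 0 0 q *\<^sub>R wedge (sff f 0 0 q) (sff f 0 1 q)
     + ginv f 0 1 q *\<^sub>R wedge (sff f 0 0 q) (sff f 1 1 q)
     + ginv f 1 1 q *\<^sub>R wedge (sff f 0 1 q) (sff f 1 1 q)"

definition normal_dH :: "nat \<Rightarrow> real \<times> real \<Rightarrow> real^4" where
  "normal_dH a q = nproj f q (pd a (mean_curv f) q)"

lemma sff_bivector_differentiable: "q \<in> U \<Longrightarrow> sff_bivector j differentiable at q"
  unfolding sff_bivector_def[abs_def]
  by (intro differentiable_add differentiable_bilinear[OF bounded_bilinear_wedge]
      sff_differentiable pd_f_differentiable)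

lemma pd_sff_bivector:
  assumes q: "q \<in> U"
  shows "pd i (sff_bivector j) q = wedge (pd i (sff f j 0) q) (pd 1 f q) + wedge (sff f j 0 q) (pd i (pd 1 f) q)
     + wedge (pd i (pd 0 f) q) (sff f j 1 q) + wedge (pd 0 f q) (pd i (sff f j 1) q)"
  unfolding sff_bivector_def[abs_def]
  by (simp add: pd_add differentiable_bilinear[OF bounded_bilinear_wedge] sff_differentiable[OF q]
      pd_f_differentiable[OF q] pd_bilinear[OF bounded_bilinear_wedge sff_differentiable[OF q]
        pd_f_differentiable[OF q]] pd_bilinear[OF bounded_bilinear_wedge pd_f_differentiable[OF q]
        sff_differentiable[OF q]])

lemma pd2_gauss_map:
  assumes q: "q \<in> U"
  shows "pd i (pd j (gauss_map f)) q =
    pd i inv_sqrt_det q *\<^sub>R sff_bivector j q + inv_sqrt_det q *\<^sub>R pd i (sff_bivector j) q"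
proof -
  have "pd i (pd j (gauss_map f)) q = pd i (\<lambda>q. inv_sqrt_det q *\<^sub>R sff_bivector j q) q"
    by (rule pd_cong_open[OF open_U q]) (rule pd_gauss_map)
  also have "\<dots> = pd i inv_sqrt_det q *\<^sub>R sff_bivector j q + inv_sqrt_det q *\<^sub>R pd i (sff_bivector j) q"
    by (rule pd_bilinear[OF bounded_bilinear_scaleR inv_sqrt_det_differentiable[OF q]
          sff_bivector_differentiable[OF q]])
  finally show ?thesis .
qed

lemma lap_gauss_map:
  assumes q: "q \<in> U"
  shows "lap f (gauss_map f) q = (sff_norm2 q * inv_sqrt_det q) *\<^sub>R tangent_bivector q
     - (2 * inv_sqrt_det q) *\<^sub>R (wedge (normal_dH 0 q) (pd 1 f q) - wedge (normal_dH 1 q) (pd 0 f q))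
     - (2 * inv_sqrt_det q) *\<^sub>R normal_bivector q"
proof -
  have "lap f (gauss_map f) q = - (\<Sum>i<2. \<Sum>j<2. ginv f i j q *\<^sub>R
      (pd i inv_sqrt_det q *\<^sub>R sff_bivector j q + inv_sqrt_det q *\<^sub>R pd i (sff_bivector j) q
        - (\<Sum>k<2. chr f k i j q *\<^sub>R (inv_sqrt_det q *\<^sub>R sff_bivector k q))))"
    unfolding lap_def pd2_gauss_map[OF q] pd_gauss_map[OF q] ..
  also have "\<dots> = (sff_norm2 q * inv_sqrt_det q) *\<^sub>R tangent_bivector q
     - (2 * inv_sqrt_det q) *\<^sub>R (wedge (normal_dH 0 q) (pd 1 f q) - wedge (normal_dH 1 q) (pd 0 f q))
     - (2 * inv_sqrt_det q) *\<^sub>R normal_bivector q"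
    unfolding sff_norm2_def normal_bivector_def normal_dH_def tangent_bivector_def
  proof (rule laplacian_bivector_identity)
    show "sff f 1 0 q = sff f 0 1 q" by (rule sff_commute[OF q])
    show "ginv f 1 0 q = ginv f 0 1 q" by (rule ginv_commute)
    show "\<And>k. chr f k 1 0 q = chr f k 0 1 q" by (rule chr_commute[OF q])
    show "nproj f q (pd 0 (pd 1 (pd 0 f)) q) = nproj f q (pd 0 (pd 0 (pd 1 f)) q)"
         "nproj f q (pd 1 (pd 0 (pd 0 f)) q) = nproj f q (pd 0 (pd 0 (pd 1 f)) q)"
         "nproj f q (pd 1 (pd 0 (pd 1 f)) q) = nproj f q (pd 0 (pd 1 (pd 1 f)) q)"
         "nproj f q (pd 1 (pd 1 (pd 0 f)) q) = nproj f q (pd 0 (pd 1 (pd 1 f)) q)"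
      using pd3_f_commute_outer[OF q] pd3_f_commute_inner[OF q] by metis+
    show "\<And>a i j. i < 2 \<Longrightarrow> j < 2 \<Longrightarrow> pd a (ginv f i j) q =
        - (\<Sum>k<2. ginv f i k q * chr f j a k q + chr f i a k q * ginv f k j q)"
      by (rule pd_ginv[OF q])
  qed (simp_all add: sff_bivector_def gauss_formula[OF q] weingarten_formula[OF q]
      pd_sff_bivector[OF q] nproj_pd_mean_curv[OF q] pd_inv_sqrt_det[OF q])
  finally show ?thesis .
qed

section \<open>The Gauss equation\<close>

lemma chr_differentiable: "q \<in> U \<Longrightarrow> chr f l k i differentiable at q"
  using differentiable_cong_open[OF open_U _ chr_eq_ip]
  by (auto intro!: differentiable_sum' differentiable_bilinear[OF bounded_bilinear_mult]
      ginv_differentiable differentiable_bilinear[OF bounded_bilinear_ip]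
      pd_f_differentiable pd2_f_differentiable)

lemma gm_pd_chr:
  assumes q: "q \<in> U"
  shows "(\<Sum>l<2. gm f 0 l q * pd j (chr f l k i) q) =
     ip (pd j (pd k (pd i f)) q) (pd 0 f q) + ip (pd k (pd i f) q) (pd j (pd 0 f) q)
     - (\<Sum>l<2. pd j (gm f 0 l) q * chr f l k i q)"
proof -
  have "pd j (\<lambda>q. \<Sum>l<2. gm f 0 l q * chr f l k i q) q = pd j (\<lambda>q. ip (pd k (pd i f) q) (pd 0 f q)) q"
    by (rule pd_cong_open[OF open_U q]) (simp add: ip_pd2_f_pd_f[of _ 0])
  also have "\<dots> = ip (pd j (pd k (pd i f)) q) (pd 0 f q) + ip (pd k (pd i f) q) (pd j (pd 0 f) q)"
    by (rule pd_bilinear[OF bounded_bilinear_ip pd2_f_differentiable[OF q] pd_f_differentiable[OF q]])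
  finally have e: "pd j (\<lambda>q. \<Sum>l<2. gm f 0 l q * chr f l k i q) q = \<dots>" .
  have "pd j (\<lambda>q. \<Sum>l<2. gm f 0 l q * chr f l k i q) q =
      (\<Sum>l<2. pd j (gm f 0 l) q * chr f l k i q + gm f 0 l q * pd j (chr f l k i) q)"
    by (simp add: pd_sum differentiable_bilinear[OF bounded_bilinear_mult] gm_differentiable[OF q]
        chr_differentiable[OF q] pd_bilinear[OF bounded_bilinear_mult gm_differentiable[OF q]
          chr_differentiable[OF q]])
  with e show ?thesis by (simp add: sum.distrib algebra_simps)
qed

theorem gauss_equation:
  assumes q: "q \<in> U"
  shows "gauss_curv f q * detg f q = ip (sff f 0 0 q) (sff f 1 1 q) - ip (sff f 0 1 q) (sff f 0 1 q)"
proof -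
  have "gauss_curv f q * detg f q = (\<Sum>l<2. gm f 0 l q * riem f l 1 0 1 q)"
    unfolding gauss_curv_def using detg_nonzero[OF q] by simp
  also have "\<dots> = (\<Sum>l<2. gm f 0 l q * pd 0 (chr f l 1 1) q) - (\<Sum>l<2. gm f 0 l q * pd 1 (chr f l 0 1) q)
      + (\<Sum>l<2. gm f 0 l q * (\<Sum>m<2. chr f l 0 m q * chr f m 1 1 q - chr f l 1 m q * chr f m 0 1 q))"
    unfolding riem_def by (simp add: algebra_simps sum.distrib sum_subtractf)
  also have "\<dots> = ip (pd 1 (pd 1 f) q) (pd 0 (pd 0 f) q) - ip (pd 0 (pd 1 f) q) (pd 1 (pd 0 f) q)
      - (\<Sum>l<2. pd 0 (gm f 0 l) q * chr f l 1 1 q) + (\<Sum>l<2. pd 1 (gm f 0 l) q * chr f l 0 1 q)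
      + (\<Sum>l<2. gm f 0 l q * (\<Sum>m<2. chr f l 0 m q * chr f m 1 1 q - chr f l 1 m q * chr f m 0 1 q))"
    unfolding gm_pd_chr[OF q] using pd3_f_commute_outer[OF q, of 0 1 1] by simp
  also have "\<dots> = ip (sff f 0 0 q) (sff f 1 1 q) - ip (sff f 0 1 q) (sff f 0 1 q)"
    unfolding ip_pd2_f_pd2_f[OF q] pd_gm[OF q] sum_lessThan_2
    using ip_pd2_f_pd_f[OF q, of 0] ip_pd2_f_pd_f[OF q, of 1] chr_commute[OF q] sff_commute[OF q, of 1 0]
      gm_commute[of f 1 0 q] gm_commute[of f "Suc 0" 0 q] chr_commute[OF q, of _ "Suc 0" 0]
      sff_commute[OF q, of "Suc 0" 0]
    by (simp add: ip_commute[of "pd _ f q" "pd _ (pd _ f) q"] ip_commute[of "sff f 1 1 q" "sff f 0 0 q"]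
        ip_commute[of "sff f (Suc 0) (Suc 0) q" "sff f 0 0 q"] sum_lessThan_2 algebra_simps)
  finally show ?thesis .
qed

lemma det_ginv:
  assumes q: "q \<in> U"
  shows "ginv f 0 0 q * ginv f 1 1 q - ginv f 0 1 q * ginv f 0 1 q = 1 / detg f q"
  unfolding ginv_def using detg_nonzero[OF q]
  by (simp add: field_simps power2_eq_square) (simp add: detg_eq algebra_simps)

lemma sff_norm2_minus_mean_curv:
  assumes q: "q \<in> U"
  shows "sff_norm2 q - 4 * ip (mean_curv f q) (mean_curv f q) =
    2 * (ginv f 0 0 q * ginv f 1 1 q - ginv f 0 1 q * ginv f 0 1 q) *
      (ip (sff f 0 1 q) (sff f 0 1 q) - ip (sff f 0 0 q) (sff f 1 1 q))"
proof -
  have two: "(2::real^4) * v = 2 *\<^sub>R v" for v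
    by (simp add: vec_eq_iff)
  show ?thesis
    unfolding sff_norm2_def mean_curv_def sum_lessThan_2
    using sff_commute[OF q, of 1 0] sff_commute[OF q, of "Suc 0" 0] ginv_commute[of f 1 0 q]
      ginv_commute[of f "Suc 0" 0 q]
    by (simp add: ip_bilinear_simps ip_commute[of "sff f 1 1 q" "sff f 0 0 q"]
        ip_commute[of "sff f (Suc 0) (Suc 0) q" "sff f 0 0 q"] ip_commute[of "sff f 1 1 q" "sff f 0 1 q"]
        ip_commute[of "sff f (Suc 0) (Suc 0) q" "sff f 0 (Suc 0) q"] ip_commute[of "sff f 0 1 q" "sff f 0 0 q"]
        ip_commute[of "sff f 0 (Suc 0) q" "sff f 0 0 q"] scaleR_add_right scaleR_add_left sum.distrib)
      (simp add: algebra_simps two ip_bilinear_simps ip_commute[of "sff f 0 (Suc 0) q" "sff f 0 0 q"]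
        ip_commute[of "sff f (Suc 0) (Suc 0) q" "sff f 0 (Suc 0) q"]
        ip_commute[of "sff f (Suc 0) (Suc 0) q" "sff f 0 0 q"])
qed

lemma sff_norm2_eq:
  assumes q: "q \<in> U"
  shows "sff_norm2 q = 4 * ip (mean_curv f q) (mean_curv f q) - 2 * gauss_curv f q"
proof -
  have K: "gauss_curv f q = (ip (sff f 0 0 q) (sff f 1 1 q) - ip (sff f 0 1 q) (sff f 0 1 q)) / detg f q"
    using gauss_equation[OF q] detg_nonzero[OF q] by (simp add: field_simps)
  show ?thesis
    using sff_norm2_minus_mean_curv[OF q] detg_nonzero[OF q] unfolding det_ginv[OF q] K
    by (simp add: field_simps)
qed

section \<open>Surfaces with parallel mean curvature vector\<close>

lemma ip_mean_curv_pd2_f: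
  assumes q: "q \<in> U"
  shows "ip (mean_curv f q) (pd j (pd l f) q) = ip (mean_curv f q) (sff f j l q)"
  unfolding gauss_formula[OF q, of j l] sum_lessThan_2
  using ip_mean_curv_pd_f[OF q, of 0] ip_mean_curv_pd_f[OF q, of 1]
  by (simp add: ip_bilinear_simps)

lemma ip_pd_mean_curv_pd_f:
  assumes q: "q \<in> U" and l: "l < 2"
  shows "ip (pd j (mean_curv f) q) (pd l f q) = - ip (mean_curv f q) (sff f j l q)"
proof -
  have "pd j (\<lambda>q. ip (mean_curv f q) (pd l f q)) q = 0"
    by (rule pd_eq_0_if_constant_on_open[OF open_U q]) (use ip_mean_curv_pd_f l in auto)
  moreover have "pd j (\<lambda>q. ip (mean_curv f q) (pd l f q)) q =
      ip (pd j (mean_curv f) q) (pd l f q) + ip (mean_curv f q) (pd j (pd l f) q)"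
    by (rule pd_bilinear[OF bounded_bilinear_ip mean_curv_differentiable[OF q] pd_f_differentiable[OF q]])
  ultimately show ?thesis using ip_mean_curv_pd2_f[OF q] by simp
qed

text \<open>The components of \<open>-A\<^sub>H\<close>, where \<open>A\<^sub>H\<close> is the shape operator in direction \<open>H\<close>.\<close>

definition dH_tan_coord :: "nat \<Rightarrow> nat \<Rightarrow> real \<times> real \<Rightarrow> real" where
  "dH_tan_coord j k q = - (\<Sum>l<2. ginv f k l q * ip (mean_curv f q) (sff f j l q))"

lemma dH_tan_coord_differentiable: "q \<in> U \<Longrightarrow> dH_tan_coord j k differentiable at q"
  unfolding dH_tan_coord_def[abs_def]
  by (intro differentiable_minus differentiable_sum' differentiable_bilinear[OF bounded_bilinear_mult]
      ginv_differentiable differentiable_bilinear[OF bounded_bilinear_ip] mean_curv_differentiable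
      sff_differentiable)

lemma pd_mean_curv_if_normal_part_0:
  assumes q: "q \<in> U" and normal: "nproj f q (pd j (mean_curv f) q) = 0"
  shows "pd j (mean_curv f) q = (\<Sum>k<2. dH_tan_coord j k q *\<^sub>R pd k f q)"
proof -
  have "pd j (mean_curv f) q = nproj f q (pd j (mean_curv f) q)
      + (\<Sum>k<2. tan_coord q (pd j (mean_curv f) q) k *\<^sub>R pd k f q)"
    unfolding nproj_eq by simp
  also have "\<dots> = (\<Sum>k<2. dH_tan_coord j k q *\<^sub>R pd k f q)"
    unfolding normal tan_coord_def dH_tan_coord_def sum_lessThan_2
    using ip_pd_mean_curv_pd_f[OF q, of 0] ip_pd_mean_curv_pd_f[OF q, of 1] by simp
  finally show ?thesis .
qed

text \<open>The Ricci equation for a parallel \<open>H\<close>: the normal curvature \<open>R\<^sup>D(\<partial>\<^sub>0,\<partial>\<^sub>1)H\<close> vanishes.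
  It is obtained by differentiating the tangential representation of \<open>\<partial>\<^sub>jH\<close> once more and
  comparing the normal parts of the (equal) mixed second derivatives of \<open>H\<close>.\<close>

lemma ricci_equation_parallel_H:
  assumes par: "\<And>q i. q \<in> U \<Longrightarrow> i < 2 \<Longrightarrow> nproj f q (pd i (mean_curv f) q) = 0" and p: "p \<in> U"
  shows "(\<Sum>k<2. dH_tan_coord 0 k p *\<^sub>R sff f 1 k p) = (\<Sum>k<2. dH_tan_coord 1 k p *\<^sub>R sff f 0 k p)"
proof -
  have tan: "pd j (mean_curv f) q = (\<Sum>k<2. dH_tan_coord j k q *\<^sub>R pd k f q)"
    if "j < 2" "q \<in> U" for j q
    using pd_mean_curv_if_normal_part_0[OF that(2) par[OF that(2,1)]] .
  have diff: "pd j (mean_curv f) differentiable at p" if "j < 2" for j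
    using differentiable_cong_open[OF open_U p tan[OF that]]
    by (auto intro!: differentiable_sum' differentiable_bilinear[OF bounded_bilinear_scaleR]
        dH_tan_coord_differentiable pd_f_differentiable p)
  have normal_pd2: "nproj f p (pd i (pd j (mean_curv f)) p) = (\<Sum>k<2. dH_tan_coord j k p *\<^sub>R sff f i k p)"
    if "j < 2" for i j
  proof -
    have "pd i (pd j (mean_curv f)) p = pd i (\<lambda>q. \<Sum>k<2. dH_tan_coord j k q *\<^sub>R pd k f q) p"
      by (rule pd_cong_open[OF open_U p tan[OF that]])
    also have "\<dots> = (\<Sum>k<2. pd i (dH_tan_coord j k) p *\<^sub>R pd k f p + dH_tan_coord j k p *\<^sub>R pd i (pd k f) p)"
      by (simp add: pd_sum differentiable_bilinear[OF bounded_bilinear_scaleR]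
          dH_tan_coord_differentiable[OF p] pd_f_differentiable[OF p]
          pd_bilinear[OF bounded_bilinear_scaleR dH_tan_coord_differentiable[OF p] pd_f_differentiable[OF p]])
    finally show ?thesis
      unfolding sum_lessThan_2 using nproj_pd_f[OF p, of 0] nproj_pd_f[OF p, of 1]
      by (simp add: nproj_add nproj_scaleR sff_def)
  qed
  have "pd 1 (pd 0 (mean_curv f)) p = pd 0 (pd 1 (mean_curv f)) p"
    by (rule pd_commute[OF open_U p mean_curv_differentiable diff diff]) auto
  then show ?thesis using normal_pd2[of 0 1] normal_pd2[of 1 0] by simp
qed

lemma bivector_ip_normal_bivector_mean_curv:
  assumes p: "p \<in> U"
  shows "bivector_ip (normal_bivector p) (wedge (mean_curv f p) w) =
    (\<Sum>k<2. dH_tan_coord 1 k p * ip (sff f 0 k p) w) - (\<Sum>k<2. dH_tan_coord 0 k p * ip (sff f 1 k p) w)"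
  unfolding normal_bivector_def dH_tan_coord_def sum_lessThan_2
  using sff_commute[OF p, of 1 0] sff_commute[OF p, of "Suc 0" 0] ginv_commute[of f 1 0 p]
    ginv_commute[of f "Suc 0" 0 p]
  by (simp add: bivector_ip_add_left bivector_ip_scaleR_left bivector_ip_wedge
      ip_commute[of "sff f _ _ p" "mean_curv f p"] algebra_simps)

lemma normal_bivector_eq_0:
  assumes par: "\<And>q i. q \<in> U \<Longrightarrow> i < 2 \<Longrightarrow> nproj f q (pd i (mean_curv f) q) = 0" and p: "p \<in> U"
    and H_nonzero: "mean_curv f p \<noteq> 0" and H_null: "ip (mean_curv f p) (mean_curv f p) = 0"
  shows "normal_bivector p = 0"
proof -
  define H where "H = mean_curv f p"
  obtain e where "ip H e \<noteq> 0" using ip_nondegenerate H_nonzero unfolding H_def by blast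
  define w where "w = nproj f p e"
  have Hw: "ip H w \<noteq> 0"
    using \<open>ip H e \<noteq> 0\<close> ip_nproj_normal ip_mean_curv_pd_f[OF p] unfolding w_def H_def by simp
  have w_normal: "ip w (pd 0 f p) = 0" "ip w (pd 1 f p) = 0"
    unfolding w_def using ip_nproj_pd_f[OF p] by auto
  have H_normal: "ip H (pd 0 f p) = 0" "ip H (pd 1 f p) = 0"
    unfolding H_def using ip_mean_curv_pd_f[OF p] by auto
  have det: "ip (pd 0 f p) (pd 0 f p) * ip (pd 1 f p) (pd 1 f p)
      - ip (pd 0 f p) (pd 1 f p) * ip (pd 0 f p) (pd 1 f p) \<noteq> 0"
    using detg_nonzero[OF p] unfolding detg_eq gm_def .
  have "\<exists>a b. sff f i j p = a *\<^sub>R H + b *\<^sub>R w" for i j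
    using normal_plane_span[OF det H_normal w_normal H_null[folded H_def] Hw]
      ip_sff_pd_f[OF p, of 0 i j] ip_sff_pd_f[OF p, of 1 i j]
    by auto
  then obtain a00 b00 a01 b01 a11 b11 where
    h: "sff f 0 0 p = a00 *\<^sub>R H + b00 *\<^sub>R w" "sff f 0 1 p = a01 *\<^sub>R H + b01 *\<^sub>R w"
      "sff f 1 1 p = a11 *\<^sub>R H + b11 *\<^sub>R w"
    by metis
  define coef where "coef = ginv f 0 0 p * (a00 * b01 - b00 * a01) + ginv f 0 1 p * (a00 * b11 - b00 * a11)
      + ginv f 1 1 p * (a01 * b11 - b01 * a11)"
  have N: "normal_bivector p = coef *\<^sub>R wedge H w"
    unfolding normal_bivector_def h wedge_in_span coef_def by (simp add: algebra_simps)
  have "bivector_ip (normal_bivector p) (wedge H w) = 0"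
    unfolding H_def bivector_ip_normal_bivector_mean_curv[OF p]
    using arg_cong[OF ricci_equation_parallel_H[OF par p], of "\<lambda>v. ip v w"]
    by (simp add: ip_bilinear_simps)
  then have "coef * (ip H w * ip H w) = 0"
    unfolding N bivector_ip_scaleR_left bivector_ip_wedge using H_null[folded H_def]
    by (simp add: ip_commute[of w H])
  then show ?thesis using N Hw by simp
qed

lemma ip_normal_dH_pd_f: "p \<in> U \<Longrightarrow> m < 2 \<Longrightarrow> ip (normal_dH a p) (pd m f p) = 0"
  unfolding normal_dH_def by (rule ip_nproj_pd_f)

lemma bivector_ip_normal_bivector_tangent:
  assumes p: "p \<in> U" and c: "c < 2"
  shows "bivector_ip (normal_bivector p) (wedge (pd c f p) z) = 0"
  unfolding normal_bivector_def using ip_sff_pd_f[OF p c]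
  by (simp add: bivector_ip_add_left bivector_ip_scaleR_left bivector_ip_wedge)

lemma bivector_ip_lap_gauss_map_tangent:
  assumes p: "p \<in> U"
  shows "bivector_ip (lap f (gauss_map f) p) (tangent_bivector p) = sff_norm2 p * inv_sqrt_det p * detg f p"
  unfolding lap_gauss_map[OF p] tangent_bivector_def detg_eq gm_def
  using ip_normal_dH_pd_f[OF p] bivector_ip_normal_bivector_tangent[OF p, of 0 "pd 1 f p"]
  by (simp add: bivector_ip_diff_left bivector_ip_scaleR_left bivector_ip_wedge
      ip_commute[of "pd (Suc 0) f p" "pd 0 f p"])

lemma bivector_ip_lap_gauss_map_mixed:
  assumes p: "p \<in> U" and c: "c < 2"
    and \<xi>: "ip \<xi> (pd 0 f p) = 0" "ip \<xi> (pd 1 f p) = 0"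
  shows "bivector_ip (lap f (gauss_map f) p) (wedge (pd c f p) \<xi>) = 2 * inv_sqrt_det p *
    (ip (normal_dH 0 p) \<xi> * ip (pd 1 f p) (pd c f p) - ip (normal_dH 1 p) \<xi> * ip (pd 0 f p) (pd c f p))"
  unfolding lap_gauss_map[OF p] tangent_bivector_def
  using ip_normal_dH_pd_f[OF p c] bivector_ip_normal_bivector_tangent[OF p c, of \<xi>] \<xi>
  by (simp add: bivector_ip_diff_left bivector_ip_scaleR_left bivector_ip_wedge
      ip_commute[of "pd (Suc 0) f p" \<xi>] ip_commute[of "pd 0 f p" \<xi>])
    (simp add: algebra_simps)

lemma flat_if_harmonic:
  assumes p: "p \<in> U" and H_null: "ip (mean_curv f p) (mean_curv f p) = 0"
    and harmonic: "lap f (gauss_map f) p = 0"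
  shows "gauss_curv f p = 0"
proof -
  have "sff_norm2 p * inv_sqrt_det p * detg f p = 0"
    using bivector_ip_lap_gauss_map_tangent[OF p] harmonic by (simp add: bivector_ip_zero_left)
  then have "sff_norm2 p = 0"
    using inv_sqrt_det_pos[OF p] detg_nonzero[OF p] by simp
  then show ?thesis using sff_norm2_eq[OF p] H_null by simp
qed

lemma normal_dH_eq_0_if_harmonic:
  assumes p: "p \<in> U" and harmonic: "lap f (gauss_map f) p = 0" and a: "a < 2"
  shows "normal_dH a p = 0"
proof (rule ip_nondegenerate)
  fix e
  define \<xi> where "\<xi> = nproj f p e"
  have \<xi>: "ip \<xi> (pd 0 f p) = 0" "ip \<xi> (pd 1 f p) = 0"
    unfolding \<xi>_def using ip_nproj_pd_f[OF p] by auto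
  have det: "ip (pd 0 f p) (pd 0 f p) * ip (pd 1 f p) (pd 1 f p)
      - ip (pd 0 f p) (pd 1 f p) * ip (pd 0 f p) (pd 1 f p) \<noteq> 0"
    using detg_nonzero[OF p] unfolding detg_eq gm_def .
  have "ip (normal_dH 0 p) \<xi> * ip (pd 1 f p) (pd c f p) - ip (normal_dH 1 p) \<xi> * ip (pd 0 f p) (pd c f p) = 0"
    if "c < 2" for c
    using bivector_ip_lap_gauss_map_mixed[OF p that \<xi>] harmonic inv_sqrt_det_pos[OF p]
    by (simp add: bivector_ip_zero_left)
  from this[of 0] this[of 1]
  have "ip (normal_dH 1 p) \<xi> = 0 \<and> - ip (normal_dH 0 p) \<xi> = 0"
    by (intro eq_0_if_nonsingular_2x2[OF det])
      (simp_all add: ip_commute[of "pd (Suc 0) f p" "pd 0 f p"] algebra_simps)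
  moreover have "ip (normal_dH a p) e = ip (normal_dH a p) \<xi>"
    unfolding \<xi>_def by (rule ip_nproj_normal[symmetric]) (use ip_normal_dH_pd_f[OF p] in auto)
  moreover have "a = 0 \<or> a = 1" using a by auto
  ultimately show "ip (normal_dH a p) e = 0" by auto
qed

lemma harmonic_if_flat_and_parallel:
  assumes p: "p \<in> U" and H_nonzero: "mean_curv f p \<noteq> 0" and H_null: "ip (mean_curv f p) (mean_curv f p) = 0"
    and flat: "gauss_curv f p = 0"
    and par: "\<And>q i. q \<in> U \<Longrightarrow> i < 2 \<Longrightarrow> nproj f q (pd i (mean_curv f) q) = 0"
  shows "lap f (gauss_map f) p = 0"
proof -
  have "sff_norm2 p = 0" using sff_norm2_eq[OF p] H_null flat by simp
  moreover have "normal_dH 0 p = 0" "normal_dH 1 p = 0" unfolding normal_dH_def using par[OF p] by auto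
  moreover have "normal_bivector p = 0" by (rule normal_bivector_eq_0[OF par p H_nonzero H_null])
  ultimately show ?thesis unfolding lap_gauss_map[OF p] by (simp add: wedge_zero_left)
qed

end

theorem proposition3p4:
  fixes U :: "(real \<times> real) set" and f :: "real \<times> real \<Rightarrow> real^4"
  assumes "lorentz_surface U f"
    and "quasi_minimal U f"
  shows "harmonic_gauss_map U f \<longleftrightarrow> flat U f \<and> parallel_H U f"
proof -
  interpret lorentz_patch U f
    using assms(1) unfolding lorentz_surface_def by unfold_locales auto
  have H: "mean_curv f p \<noteq> 0" "ip (mean_curv f p) (mean_curv f p) = 0" if "p \<in> U" for p
    using assms(2) that unfolding quasi_minimal_def by auto
  show ?thesis
    unfolding harmonic_gauss_map_def flat_def parallel_H_def
    using flat_if_harmonic[OF _ H(2)] normal_dH_eq_0_if_harmonic harmonic_if_flat_and_parallel[OF _ H]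
    unfolding normal_dH_def by blast
qed

end
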